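(* Let $q\ge3$, $G\in\mathbb G^q$ and $S=\Psi(G)$. Let $w$ be a non-root white vertex of $S$ such that, for all colors except one color $i$, the neighbor of $w$ of that color is a leaf of $S$, and such that the color-$i$ neighbor $v$ of $w$ has degree at least $2$. Let $S'$ be obtained from $S$ by deleting $w$, its $q-1$ leaf neighbors, and the edge $\{w,v\}$ (the cyclic order at $v$ being restricted to the remaining edges). Then $S'\in\mathbb S^q$, and the colored triangulations dual to $G_{\hat 0}$ and to $(\Psi^{-1}(S'))_{\hat 0}$ are PL-homeomorphic. (Iterating, removing pending trees from a constellation does not change the topology of the dual of $G_{\hat 0}$.)
   Context: Fix an integer $q\ge 2$. A $(q+1)$-edge-colored graph (colored graph) is a finite connected graph, multiple edges allowed and no loops, whose edges carry colors in $\{0,1,\dots,q\}$ such that every vertex is incident to exactly one edge of each color. It is rooted if one color-0 edge is distinguished and oriented; it is bipartite if its vertices can be colored black and white so that every edge joins a black and a white vertex, with the convention that the origin of the root edge is black. $\mathbb G^q$ denotes the set of rooted bipartite colored graphs. $G_{\hat 0}$ denotes the graph obtained from $G$ by deleting all color-0 edges. Constellations: given $G\in\mathbb G^q$, its constellation $S=\Psi(G)$ is obtained as follows: orient every edge from its black to its white endpoint; contract every color-0 edge into a single vertex, called a white vertex of $S$ (the one coming from the root edge is the root vertex). For each $i\in\{1,\dots,q\}$ the color-$i$ edges now form directed cycles; for each such cycle, passing through white vertices $w_1,\dots,w_p$ in this cyclic order, add a new vertex of color $i$ joined by one color-$i$ edge to each $w_k$, equip the new vertex with the cyclic order $(w_1,\dots,w_p)$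 of its incident edges, and delete the original color-$i$ edges of the cycle. Thus $S$ is a connected graph with a distinguished white vertex, in which each white vertex has exactly one incident edge of each color $1,\dots,q$, each edge of color $i$ joins a white vertex to a vertex of color $i$, and each colored vertex carries a cyclic order of its incident edges; such objects form the set $\mathbb S^q$ of $q$-constellations, and $\Psi:\mathbb G^q\to\mathbb S^q$ is a bijection. Dual triangulation: for a connected graph $H$ in which every vertex has exactly one incident edge of each color of a set $A$ with $|A|=k$, the dual $(k-1)$-dimensional colored triangulation $\mathcal T(H)$ is obtained by taking, for each vertex of $H$, a $(k-1)$-simplex whose vertices are labelled bijectively by $A$, and, for each edge of color $a$ of $H$, identifying the facets opposite to the vertex labelled $a$ in the simplices of its two endpoints, matching vertices with equal labels. *)

theory Defs
  imports "HOL-Analysis.Analysis" "HOL-Combinatorics.Permutations"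
begin

(* Colours: the colour set {0,...,q} is modelled as 'c option, None = colour 0,
   Some c = colours 1..q, with q = CARD('c).
   A (q+1)-edge-coloured graph: vertex set V and, for every colour a, the function
   sigma a sending a vertex to the other endpoint of its unique colour-a edge
   (a fixed-point-free involution; multiple edges allowed, no loops). *)

definition colored_graph :: "'v set \<Rightarrow> ('a \<Rightarrow> 'v \<Rightarrow> 'v) \<Rightarrow> bool" where
  "colored_graph V \<sigma> \<longleftrightarrow> finite V \<and> V \<noteq> {} \<and>
     (\<forall>a. \<forall>x\<in>V. \<sigma> a x \<in> V \<and> \<sigma> a x \<noteq> x \<and> \<sigma> a (\<sigma> a x) = x) \<and>
     (\<forall>x\<in>V. \<forall>y\<in>V. (\<lambda>p s. \<exists>a. s = \<sigma> a p)\<^sup>*\<^sup>* x y)"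

(* rooted bipartite coloured graph: r is the origin of the (oriented) w0 colour-0 edge,
   coloured black *)
definition Gq :: "'v set \<Rightarrow> ('c option \<Rightarrow> 'v \<Rightarrow> 'v) \<Rightarrow> 'v \<Rightarrow> bool" where
  "Gq V \<sigma> r \<longleftrightarrow> colored_graph V \<sigma> \<and> r \<in> V \<and>
     (\<exists>black. black r \<and> (\<forall>a. \<forall>x\<in>V. black (\<sigma> a x) \<longleftrightarrow> \<not> black x))"

definition is_black :: "('c option \<Rightarrow> 'v \<Rightarrow> 'v) \<Rightarrow> 'v \<Rightarrow> 'v \<Rightarrow> bool" where
  "is_black \<sigma> r x \<longleftrightarrow> (\<lambda>p s. \<exists>a b. s = \<sigma> b (\<sigma> a p))\<^sup>*\<^sup>* r x"

(* q-constellation: white vertices W, root white vertex, nb c w = the colour-c vertex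
   (c, nb c w) adjacent to w, and succ c w = the successor of (the edge to) w in the
   cyclic order at the colour-c vertex nb c w; the cyclic order at every coloured vertex
   is a single cycle on its incident edges. *)
definition constellation ::
  "'w set \<Rightarrow> 'w \<Rightarrow> ('c \<Rightarrow> 'w \<Rightarrow> 'x) \<Rightarrow> ('c \<Rightarrow> 'w \<Rightarrow> 'w) \<Rightarrow> bool" where
  "constellation W w0 nb succ \<longleftrightarrow> finite W \<and> w0 \<in> W \<and>
     (\<forall>c. succ c permutes W \<and> (\<forall>w\<in>W. nb c (succ c w) = nb c w) \<and>
        (\<forall>w\<in>W. \<forall>w'\<in>W. nb c w = nb c w' \<longrightarrow> (\<exists>n. (succ c ^^ n) w = w'))) \<and>
     (\<forall>w\<in>W. \<forall>w'\<in>W.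
        (\<lambda>p s. p \<in> W \<and> s \<in> W \<and> (\<exists>c. nb c p = nb c s))\<^sup>*\<^sup>* w w')"

definition nbdeg :: "'w set \<Rightarrow> ('c \<Rightarrow> 'w \<Rightarrow> 'x) \<Rightarrow> 'c \<Rightarrow> 'w \<Rightarrow> nat" where
  "nbdeg W nb c w = card {w'\<in>W. nb c w' = nb c w}"

(* S = Psi(G) up to isomorphism: white vertices of S <-> colour-0 edges of G, identified
   with their black endpoints; the colour-c directed cycle goes from the colour-0 edge at
   b to the colour-0 edge containing sigma_c(b). *)
definition psi_rel ::
  "'v set \<Rightarrow> ('c option \<Rightarrow> 'v \<Rightarrow> 'v) \<Rightarrow> 'v \<Rightarrow>
   'w set \<Rightarrow> 'w \<Rightarrow> ('c \<Rightarrow> 'w \<Rightarrow> 'x) \<Rightarrow> ('c \<Rightarrow> 'w \<Rightarrow> 'w) \<Rightarrow> bool" where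
  "psi_rel V \<sigma> r W w0 nb succ \<longleftrightarrow>
     (\<exists>\<phi>. bij_betw \<phi> {x\<in>V. is_black \<sigma> r x} W \<and> \<phi> r = w0 \<and>
        (\<forall>c. \<forall>b\<in>{x\<in>V. is_black \<sigma> r x}.
           \<phi> (\<sigma> None (\<sigma> (Some c) b)) = succ c (\<phi> b)))"

(* removing the white vertex w (and its leaves and the edge to its colour-i neighbour):
   w is skipped in every cyclic order *)
definition remove_succ :: "('c \<Rightarrow> 'w \<Rightarrow> 'w) \<Rightarrow> 'w \<Rightarrow> 'c \<Rightarrow> 'w \<Rightarrow> 'w" where
  "remove_succ succ w c x =
     (if x = w then x else if succ c x = w then succ c w else succ c x)"

(* ---- dual coloured triangulation and its PL topology ----
   For H = (V, tau) with colours 'c, T(H) has one simplex per vertex v, with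
   barycentric coordinates t : real^'c (vertex labelled c has t$c = 1).
   The facet opposite label c is {t$c = 0}; an edge of colour c glues these facets. *)

definition std_simplex :: "(real^'c) set" where
  "std_simplex = {t. (\<forall>c. 0 \<le> t$c) \<and> (\<Sum>c\<in>UNIV. t$c) = 1}"

definition glue :: "'v set \<Rightarrow> ('c \<Rightarrow> 'v \<Rightarrow> 'v) \<Rightarrow> real^'c \<Rightarrow> 'v \<Rightarrow> 'v \<Rightarrow> bool" where
  "glue V \<tau> t p s \<longleftrightarrow> p \<in> V \<and> (\<exists>c. t$c = 0 \<and> s = \<tau> c p)"

definition pt :: "'v set \<Rightarrow> ('c \<Rightarrow> 'v \<Rightarrow> 'v) \<Rightarrow> 'v \<Rightarrow> real^'c \<Rightarrow> ('v \<times> (real^'c)) set" where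
  "pt V \<tau> v t = {(u, t) | u. (glue V \<tau> t)\<^sup>*\<^sup>* v u}"

definition realization :: "'v set \<Rightarrow> ('c \<Rightarrow> 'v \<Rightarrow> 'v) \<Rightarrow> ('v \<times> (real^'c)) set set" where
  "realization V \<tau> = {pt V \<tau> v t | v t. v \<in> V \<and> t \<in> std_simplex}"

definition PL_map ::
  "'v set \<Rightarrow> ('c \<Rightarrow> 'v \<Rightarrow> 'v) \<Rightarrow> 'u set \<Rightarrow> ('d \<Rightarrow> 'u \<Rightarrow> 'u) \<Rightarrow>
   (('v \<times> (real^'c)) set \<Rightarrow> ('u \<times> (real^'d)) set) \<Rightarrow> bool" where
  "PL_map V1 \<tau>1 V2 \<tau>2 f \<longleftrightarrow>
     f ` realization V1 \<tau>1 \<subseteq> realization V2 \<tau>2 \<and>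
     (\<forall>v\<in>V1. \<exists>(n::nat) (K :: nat \<Rightarrow> (real^'c) set) (u :: nat \<Rightarrow> 'u)
                 (L :: nat \<Rightarrow> real^'c \<Rightarrow> real^'d).
        (\<Union>j<n. K j) = std_simplex \<and>
        (\<forall>j<n. (\<exists>F. finite F \<and> K j = convex hull F) \<and> u j \<in> V2 \<and>
           (\<exists>A b. linear A \<and> (\<forall>t\<in>K j. L j t = A t + b)) \<and>
           (\<forall>t\<in>K j. L j t \<in> std_simplex \<and>
              f (pt V1 \<tau>1 v t) = pt V2 \<tau>2 (u j) (L j t))))"

definition PL_homeomorphic ::
  "'v set \<Rightarrow> ('c::finite \<Rightarrow> 'v \<Rightarrow> 'v) \<Rightarrow> 'u set \<Rightarrow> ('d::finite \<Rightarrow> 'u \<Rightarrow> 'u) \<Rightarrow> bool" where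
  "PL_homeomorphic V1 \<tau>1 V2 \<tau>2 \<longleftrightarrow>
     (\<exists>f. bij_betw f (realization V1 \<tau>1) (realization V2 \<tau>2) \<and>
          PL_map V1 \<tau>1 V2 \<tau>2 f \<and>
          PL_map V2 \<tau>2 V1 \<tau>1 (inv_into (realization V1 \<tau>1) f))"

(* G with colour-0 edges deleted *)
definition hat0 :: "('c option \<Rightarrow> 'v \<Rightarrow> 'v) \<Rightarrow> 'c \<Rightarrow> 'v \<Rightarrow> 'v" where
  "hat0 \<sigma> c = \<sigma> (Some c)"

end

theory Submission
  imports Defs
begin

text \<open>The white vertex \<open>w\<close> of \<open>S\<close> is a colour-0 edge \<open>{b, b'}\<close> of \<open>G\<close> with \<open>b\<close> black.
  For \<open>c \<noteq> i\<close> the colour-\<open>c\<close> cycle through \<open>w\<close> is a loop, so \<open>\<sigma>\<^sub>c b = b'\<close>: without the colour-0 edges, the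
  vertices \<open>b\<close>, \<open>b'\<close> form a dipole, joined by every colour except \<open>i\<close>. Deleting \<open>w\<close> from
  \<open>S\<close> amounts to deleting \<open>b\<close>, \<open>b'\<close> and joining their \<open>i\<close>-neighbours \<open>x\<close>, \<open>y\<close> by an
  edge of colour \<open>i\<close>; this graph is \<open>\<Psi>\<^sup>-\<^sup>1(S')\<close>, which is unique up to isomorphism.
  In the dual triangulation the simplices of \<open>b\<close> and \<open>b'\<close> are glued along all facets but
  one and form a ball between the simplices of \<open>x\<close> and \<open>y\<close>. Pushing barycentric coordinates
  along the direction from the facet opposite \<open>i\<close> towards the vertex \<open>i\<close>, piecewise affinely,
  squeezes the simplices of \<open>x\<close>, \<open>b\<close>, \<open>b'\<close> into the single simplex of \<open>x\<close> of the reduced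
  triangulation, and this is a PL homeomorphism.\<close>

section \<open>Points of a dual triangulation\<close>

definition involutive_on :: "'v set \<Rightarrow> ('c \<Rightarrow> 'v \<Rightarrow> 'v) \<Rightarrow> bool" where
  "involutive_on V \<tau> \<longleftrightarrow> (\<forall>c v. v \<in> V \<longrightarrow> \<tau> c v \<in> V \<and> \<tau> c (\<tau> c v) = v)"

text \<open>Evaluates a function of (simplex, barycentric coordinates) at an arbitrary representative
  of a point of the realization; this is well defined when the function respects gluing.\<close>

definition apply_rep :: "('v \<Rightarrow> 'r \<Rightarrow> 'z) \<Rightarrow> ('v \<times> 'r) set \<Rightarrow> 'z" where
  "apply_rep R P = R (fst (SOME z. z \<in> P)) (snd (SOME z. z \<in> P))"

lemma glue_sym: "involutive_on V \<tau> \<Longrightarrow> glue V \<tau> t p s \<Longrightarrow> glue V \<tau> t s p"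
  unfolding glue_def involutive_on_def by metis

lemma pt_eq_if_glue:
  assumes "involutive_on V \<tau>" "glue V \<tau> t p s"
  shows "pt V \<tau> p t = pt V \<tau> s t"
proof -
  have "(glue V \<tau> t)\<^sup>*\<^sup>* p u \<longleftrightarrow> (glue V \<tau> t)\<^sup>*\<^sup>* s u" for u
    using assms glue_sym[OF assms]
    by (meson converse_rtranclp_into_rtranclp rtranclp.rtrancl_refl rtranclp_trans)
  then show ?thesis unfolding pt_def by simp
qed

lemma pt_coords_eq: "pt V \<tau> u t = pt V \<tau> u' t' \<Longrightarrow> t = t'"
proof -
  assume e: "pt V \<tau> u t = pt V \<tau> u' t'"
  have "(u, t) \<in> pt V \<tau> u t" unfolding pt_def by auto
  then have "(u, t) \<in> pt V \<tau> u' t'" using e by simp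
  then show ?thesis unfolding pt_def by auto
qed

lemma apply_rep_pt:
  assumes "\<And>p s. glue V \<tau> t p s \<Longrightarrow> R p t = R s t"
  shows "apply_rep R (pt V \<tau> v t) = R v t"
proof -
  have ne: "(v, t) \<in> pt V \<tau> v t" unfolding pt_def by auto
  define z where "z = (SOME z. z \<in> pt V \<tau> v t)"
  have "z \<in> pt V \<tau> v t" unfolding z_def using ne by (rule someI)
  then obtain u where z: "z = (u, t)" "(glue V \<tau> t)\<^sup>*\<^sup>* v u" unfolding pt_def by auto
  have "R u t = R v t" using z(2)
    by (induction rule: rtranclp_induct) (auto dest: assms)
  then show ?thesis unfolding apply_rep_def z_def[symmetric] z by simp
qed

lemma pt_in_realization: "v \<in> V \<Longrightarrow> t \<in> std_simplex \<Longrightarrow> pt V \<tau> v t \<in> realization V \<tau>"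
  unfolding realization_def by blast

lemma std_simplex_nonneg: "t \<in> std_simplex \<Longrightarrow> 0 \<le> t$c"
  unfolding std_simplex_def by auto


section \<open>Piecewise-linear maps\<close>

lemma polyhedron_coord_le: "polyhedron {t::real^'c::finite. k1 * t$a \<le> k2 * t$b}"
proof -
  have "{t::real^'c. k1 * t$a \<le> k2 * t$b} = {t. (k1 *\<^sub>R axis a 1 - k2 *\<^sub>R axis b 1) \<bullet> t \<le> 0}"
    by (auto simp: inner_diff_left inner_axis')
  then show ?thesis by (simp add: polyhedron_halfspace_le)
qed

lemma polyhedron_std_simplex: "polyhedron (std_simplex :: (real^'c::finite) set)"
proof -
  have ip: "(\<chi> k. 1) \<bullet> t = (\<Sum>k\<in>UNIV. t$k)" for t :: "real^'c"
    by (simp add: inner_vec_def)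
  have e: "std_simplex = (\<Inter>c\<in>UNIV. {t::real^'c. 0 \<le> t$c}) \<inter> {t. (\<chi> k. 1) \<bullet> t = 1}"
    unfolding std_simplex_def ip by auto
  have "polyhedron (\<Inter>c\<in>UNIV. {t::real^'c. 0 \<le> t$c})"
    by (rule polyhedron_Inter) (auto intro: polyhedron_coord_le[of 0 _ 1, simplified])
  then show ?thesis unfolding e by (intro polyhedron_Int polyhedron_hyperplane)
qed

lemma bounded_std_simplex: "bounded (std_simplex :: (real^'c::finite) set)"
proof -
  have "std_simplex \<subseteq> cbox (0::real^'c) (\<chi> k. 1)"
  proof
    fix t :: "real^'c" assume t: "t \<in> std_simplex"
    have "t$c \<le> (\<Sum>k\<in>UNIV. t$k)" for c
      using t unfolding std_simplex_def by (intro member_le_sum) auto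
    then show "t \<in> cbox 0 (\<chi> k. 1)" using t unfolding std_simplex_def by (auto simp: mem_box_cart)
  qed
  then show ?thesis using bounded_cbox bounded_subset by blast
qed

lemma polytope_std_simplex: "polytope (std_simplex :: (real^'c::finite) set)"
  by (simp add: polytope_eq_bounded_polyhedron polyhedron_std_simplex bounded_std_simplex)

text \<open>The per-simplex condition of \<open>PL_map\<close>, with the pieces indexed by an arbitrary finite set.\<close>

definition affine_pieces ::
  "'u set \<Rightarrow> ('d \<Rightarrow> 'u \<Rightarrow> 'u) \<Rightarrow> (real^'c \<Rightarrow> ('u \<times> (real^'d)) set) \<Rightarrow>
   'j set \<Rightarrow> ('j \<Rightarrow> (real^'c) set) \<Rightarrow> ('j \<Rightarrow> 'u) \<Rightarrow> ('j \<Rightarrow> real^'c \<Rightarrow> real^'d) \<Rightarrow> bool" where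
  "affine_pieces V \<tau> F J K u L \<longleftrightarrow> finite J \<and> (\<Union>j\<in>J. K j) = std_simplex \<and>
     (\<forall>j\<in>J. polytope (K j) \<and> u j \<in> V \<and> (\<exists>A b. linear A \<and> (\<forall>t\<in>K j. L j t = A t + b)) \<and>
        (\<forall>t\<in>K j. F t = pt V \<tau> (u j) (L j t)))"

lemma affine_pieces_single:
  fixes u :: 'u and j :: 'j and F :: "real^'c::finite \<Rightarrow> ('u \<times> (real^'c)) set"
  assumes "u \<in> V" "\<And>t. t \<in> std_simplex \<Longrightarrow> F t = pt V \<tau> u t"
  shows "affine_pieces V \<tau> F {j} (\<lambda>_. std_simplex) (\<lambda>_. u) (\<lambda>_ t. t)"
  unfolding affine_pieces_def using assms polytope_std_simplex
  by (auto intro!: exI[of _ "\<lambda>t. t"] exI[of _ 0] simp: linear_id[unfolded id_def])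

lemma PL_mapI:
  fixes V1 :: "'v set" and \<tau>1 :: "'c::finite \<Rightarrow> 'v \<Rightarrow> 'v"
    and V2 :: "'u set" and \<tau>2 :: "'d::finite \<Rightarrow> 'u \<Rightarrow> 'u"
  assumes into: "\<And>v t. v \<in> V1 \<Longrightarrow> t \<in> std_simplex \<Longrightarrow> f (pt V1 \<tau>1 v t) \<in> realization V2 \<tau>2"
    and pieces: "\<And>v. v \<in> V1 \<Longrightarrow>
      \<exists>(J :: 'j set) K u L. affine_pieces V2 \<tau>2 (\<lambda>t. f (pt V1 \<tau>1 v t)) J K u L"
  shows "PL_map V1 \<tau>1 V2 \<tau>2 f"
  unfolding PL_map_def
proof (intro conjI ballI)
  show "f ` realization V1 \<tau>1 \<subseteq> realization V2 \<tau>2"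
    using into unfolding realization_def by blast
  fix v assume v: "v \<in> V1"
  obtain J :: "'j set" and K u L where P: "affine_pieces V2 \<tau>2 (\<lambda>t. f (pt V1 \<tau>1 v t)) J K u L"
    using pieces[OF v] by blast
  then have "finite J" unfolding affine_pieces_def by blast
  then obtain e where e: "bij_betw e {..<card J} J"
    using ex_bij_betw_nat_finite[of J] by (auto simp: atLeast0LessThan)
  have "(\<Union>j<card J. K (e j)) = (\<Union>j\<in>e ` {..<card J}. K j)" by simp
  also have "e ` {..<card J} = J" using e by (simp add: bij_betw_def)
  finally have cover: "(\<Union>j<card J. K (e j)) = std_simplex"
    using P unfolding affine_pieces_def by simp
  have in_simplex: "L j t \<in> std_simplex" if "j \<in> J" "t \<in> K j" for j t
  proof -
    have t: "t \<in> std_simplex" using P that unfolding affine_pieces_def by blast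
    obtain v' t' where "f (pt V1 \<tau>1 v t) = pt V2 \<tau>2 v' t'" "t' \<in> std_simplex"
      using into[OF v t] unfolding realization_def by blast
    moreover have "f (pt V1 \<tau>1 v t) = pt V2 \<tau>2 (u j) (L j t)"
      using P that unfolding affine_pieces_def by blast
    ultimately show ?thesis using pt_coords_eq by metis
  qed
  show "\<exists>(n::nat) (K :: nat \<Rightarrow> (real^'c) set) (u :: nat \<Rightarrow> 'u) (L :: nat \<Rightarrow> real^'c \<Rightarrow> real^'d).
      (\<Union>j<n. K j) = std_simplex \<and>
      (\<forall>j<n. (\<exists>F. finite F \<and> K j = convex hull F) \<and> u j \<in> V2 \<and>
         (\<exists>A b. linear A \<and> (\<forall>t\<in>K j. L j t = A t + b)) \<and>
         (\<forall>t\<in>K j. L j t \<in> std_simplex \<and> f (pt V1 \<tau>1 v t) = pt V2 \<tau>2 (u j) (L j t)))"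
  proof (intro exI[of _ "card J"] exI[of _ "K \<circ> e"] exI[of _ "u \<circ> e"] exI[of _ "L \<circ> e"] conjI allI impI)
    show "(\<Union>j<card J. (K \<circ> e) j) = std_simplex" using cover by simp
    fix j assume "j < card J"
    then have j: "e j \<in> J" using bij_betwE[OF e] by blast
    then show "\<exists>F. finite F \<and> (K \<circ> e) j = convex hull F"
      using P unfolding affine_pieces_def polytope_def by auto
    show "(u \<circ> e) j \<in> V2" using P j unfolding affine_pieces_def by auto
    show "\<exists>A b. linear A \<and> (\<forall>t\<in>(K \<circ> e) j. (L \<circ> e) j t = A t + b)"
      using P j unfolding affine_pieces_def by auto
    show "\<forall>t\<in>(K \<circ> e) j. (L \<circ> e) j t \<in> std_simplex \<and>
        f (pt V1 \<tau>1 v t) = pt V2 \<tau>2 ((u \<circ> e) j) ((L \<circ> e) j t)"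
      using P j in_simplex unfolding affine_pieces_def by auto
  qed
qed

lemma PL_map_cong:
  fixes V1 :: "'v set" and \<tau>1 :: "'c::finite \<Rightarrow> 'v \<Rightarrow> 'v"
    and V2 :: "'u set" and \<tau>2 :: "'d::finite \<Rightarrow> 'u \<Rightarrow> 'u"
  assumes f: "PL_map V1 \<tau>1 V2 \<tau>2 f" and eq: "\<And>P. P \<in> realization V1 \<tau>1 \<Longrightarrow> g P = f P"
  shows "PL_map V1 \<tau>1 V2 \<tau>2 g"
  unfolding PL_map_def
proof (intro conjI ballI)
  have "g ` realization V1 \<tau>1 = f ` realization V1 \<tau>1"
    using eq by (intro image_cong) auto
  then show "g ` realization V1 \<tau>1 \<subseteq> realization V2 \<tau>2" using f unfolding PL_map_def by simp
  fix v assume v: "v \<in> V1"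
  have eq_pt: "g (pt V1 \<tau>1 v t) = f (pt V1 \<tau>1 v t)" if "t \<in> std_simplex" for t
    using eq pt_in_realization[OF v that] by blast
  from f v obtain n and K :: "nat \<Rightarrow> (real^'c) set" and u :: "nat \<Rightarrow> 'u" and L :: "nat \<Rightarrow> real^'c \<Rightarrow> real^'d"
    where cover: "(\<Union>j<n. K j) = std_simplex"
      and P: "\<forall>j<n. (\<exists>F. finite F \<and> K j = convex hull F) \<and> u j \<in> V2 \<and>
         (\<exists>A b. linear A \<and> (\<forall>t\<in>K j. L j t = A t + b)) \<and>
         (\<forall>t\<in>K j. L j t \<in> std_simplex \<and> f (pt V1 \<tau>1 v t) = pt V2 \<tau>2 (u j) (L j t))"
    using bspec[OF f[unfolded PL_map_def, THEN conjunct2] v]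
    by (elim exE conjE) (intro that, assumption+)
  have "\<forall>j<n. \<forall>t\<in>K j. g (pt V1 \<tau>1 v t) = f (pt V1 \<tau>1 v t)"
    using cover eq_pt by blast
  with cover P show "\<exists>(n::nat) K u L. (\<Union>j<n. K j) = std_simplex \<and>
      (\<forall>j<n. (\<exists>F. finite F \<and> K j = convex hull F) \<and> u j \<in> V2 \<and>
         (\<exists>A b. linear A \<and> (\<forall>t\<in>K j. L j t = A t + b)) \<and>
         (\<forall>t\<in>K j. L j t \<in> std_simplex \<and> g (pt V1 \<tau>1 v t) = pt V2 \<tau>2 (u j) (L j t)))"
    by (intro exI[of _ n] exI[of _ K] exI[of _ u] exI[of _ L]) simp
qed

lemma PL_homeomorphicI:
  assumes "PL_map V1 \<tau>1 V2 \<tau>2 f" "PL_map V2 \<tau>2 V1 \<tau>1 g"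
    and "\<And>P. P \<in> realization V1 \<tau>1 \<Longrightarrow> g (f P) = P"
    and "\<And>Q. Q \<in> realization V2 \<tau>2 \<Longrightarrow> f (g Q) = Q"
  shows "PL_homeomorphic V1 \<tau>1 V2 \<tau>2"
proof -
  have fi: "f ` realization V1 \<tau>1 \<subseteq> realization V2 \<tau>2"
    and gi: "g ` realization V2 \<tau>2 \<subseteq> realization V1 \<tau>1"
    using assms(1,2) unfolding PL_map_def by auto
  have bij: "bij_betw f (realization V1 \<tau>1) (realization V2 \<tau>2)"
    by (rule bij_betw_byWitness[where f'=g]) (use fi gi assms(3,4) in auto)
  have "inv_into (realization V1 \<tau>1) f Q = g Q" if Q: "Q \<in> realization V2 \<tau>2" for Q
    using bij gi Q assms(4)[OF Q] by (metis bij_betw_def image_subset_iff inv_into_f_f)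
  then have "PL_map V2 \<tau>2 V1 \<tau>1 (inv_into (realization V1 \<tau>1) f)"
    by (intro PL_map_cong[OF assms(2)]) auto
  then show ?thesis unfolding PL_homeomorphic_def using bij assms(1) by blast
qed


section \<open>Removing a dipole\<close>

datatype layer = Lower | Middle | Upper

lemma finite_UNIV_layer: "finite (UNIV :: layer set)"
proof -
  have "UNIV = {Lower, Middle, Upper}" using layer.exhaust by auto
  then show ?thesis by (metis finite.emptyI finite.insertI)
qed

locale dipole_removal =
  fixes V :: "'v set" and \<tau> :: "'c::finite \<Rightarrow> 'v \<Rightarrow> 'v" and V' :: "'u set"
    and \<tau>' :: "'c \<Rightarrow> 'u \<Rightarrow> 'u" and \<psi> :: "'v \<Rightarrow> 'u" and i :: 'c and b b' x y :: 'v
  assumes two_colours: "CARD('c) \<ge> 2"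
    and invol: "involutive_on V \<tau>" and invol': "involutive_on V' \<tau>'"
    and b_in: "b \<in> V" and b'_in: "b' \<in> V"
    and distinct: "b \<noteq> b'" "x \<noteq> b" "x \<noteq> b'" "y \<noteq> b" "y \<noteq> b'" "x \<noteq> y"
    and dipole: "\<And>c. c \<noteq> i \<Longrightarrow> \<tau> c b = b'" and b_i: "\<tau> i b = x" and b'_i: "\<tau> i b' = y"
    and \<psi>_bij: "bij_betw \<psi> (V - {b, b'}) V'"
    and \<psi>_hom: "\<And>u c. u \<in> V - {b, b'} \<Longrightarrow> (c = i \<Longrightarrow> u \<noteq> x \<and> u \<noteq> y) \<Longrightarrow> \<tau>' c (\<psi> u) = \<psi> (\<tau> c u)"
    and \<psi>_x: "\<tau>' i (\<psi> x) = \<psi> y" and \<psi>_y: "\<tau>' i (\<psi> y) = \<psi> x"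
begin

definition n_other :: real where "n_other = real (card (UNIV - {i}))"

definition min_other :: "real^'c \<Rightarrow> real" where
  "min_other t = Min ((\<lambda>c. t$c) ` (UNIV - {i}))"

definition \<mu> :: "real^'c \<Rightarrow> real" where "\<mu> t = n_other * min_other t"

text \<open>\<open>\<mu>\<close> vanishes exactly on the facets along which the simplices of \<open>b\<close> and \<open>b'\<close> are glued;
  \<open>shift a\<close> moves along the line through the vertex \<open>i\<close> and the barycentre of the opposite
  facet.\<close>

definition shift :: "real \<Rightarrow> real^'c \<Rightarrow> real^'c" where
  "shift a t = (\<chi> k. if k = i then t$k + a else t$k - a / n_other)"

lemma n_other_pos: "n_other > 0"
  unfolding n_other_def using two_colours by (simp add: card_Diff_singleton)

lemma exists_other_colour: "\<exists>c. c \<noteq> i"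
proof -
  have "card (UNIV - {i}) \<noteq> 0" using two_colours by (simp add: card_Diff_singleton)
  then have "UNIV - {i} \<noteq> {}" by (metis card.empty)
  then show ?thesis by blast
qed

lemma other_colour_images:
  "finite ((\<lambda>c. t$c) ` (UNIV - {i}))" "(\<lambda>c. t$c) ` (UNIV - {i}) \<noteq> {}"
  using exists_other_colour by auto

lemma min_other_le: "c \<noteq> i \<Longrightarrow> min_other t \<le> t$c"
  unfolding min_other_def using other_colour_images by (intro Min_le) auto

lemma min_other_attained: "\<exists>c. c \<noteq> i \<and> min_other t = t$c"
proof -
  have "min_other t \<in> (\<lambda>c. t$c) ` (UNIV - {i})"
    unfolding min_other_def using other_colour_images by (rule Min_in)
  then show ?thesis by auto
qed

lemma min_other_eqI:
  assumes "\<And>c. c \<noteq> i \<Longrightarrow> z \<le> t$c" "c0 \<noteq> i" "t$c0 = z"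
  shows "min_other t = z"
  using min_other_attained[of t] min_other_le[OF assms(2), of t] assms(1,3) by force

lemma shift_i [simp]: "(shift a t)$i = t$i + a"
  unfolding shift_def by simp

lemma shift_other [simp]: "c \<noteq> i \<Longrightarrow> (shift a t)$c = t$c - a / n_other"
  unfolding shift_def by simp

lemma shift_shift [simp]: "shift a (shift a' t) = shift (a' + a) t"
  unfolding shift_def by (simp add: vec_eq_iff diff_divide_distrib add_divide_distrib algebra_simps)

lemma shift_0 [simp]: "shift 0 t = t"
  unfolding shift_def by (simp add: vec_eq_iff)

lemma \<mu>_shift [simp]: "\<mu> (shift a t) = \<mu> t - a"
proof -
  obtain c0 where c0: "c0 \<noteq> i" "min_other t = t$c0" using min_other_attained by blast
  have "min_other (shift a t) = min_other t - a / n_other"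
    using c0 min_other_le[of _ t] by (intro min_other_eqI[of _ _ c0]) auto
  then show ?thesis using n_other_pos by (simp add: \<mu>_def right_diff_distrib)
qed

lemma min_other_nonneg: "t \<in> std_simplex \<Longrightarrow> 0 \<le> min_other t"
  using min_other_attained[of t] std_simplex_nonneg by metis

lemma \<mu>_nonneg: "t \<in> std_simplex \<Longrightarrow> 0 \<le> \<mu> t"
  unfolding \<mu>_def using min_other_nonneg n_other_pos by simp

lemma \<mu>_eq_0: "t \<in> std_simplex \<Longrightarrow> c \<noteq> i \<Longrightarrow> t$c = 0 \<Longrightarrow> \<mu> t = 0"
  unfolding \<mu>_def using min_other_le[of c t] min_other_nonneg[of t] by simp

lemma sum_shift: "(\<Sum>k\<in>UNIV. (shift a t)$k) = (\<Sum>k\<in>UNIV. t$k)"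
proof -
  have split: "sum g UNIV = g i + sum g (UNIV - {i})" for g :: "'c \<Rightarrow> real"
    by (rule sum.remove) auto
  have "(\<Sum>k\<in>UNIV-{i}. (shift a t)$k) = (\<Sum>k\<in>UNIV-{i}. t$k - a / n_other)"
    by (intro sum.cong) auto
  also have "\<dots> = (\<Sum>k\<in>UNIV-{i}. t$k) - n_other * (a / n_other)"
    by (simp add: sum_subtractf n_other_def)
  finally show ?thesis using split[of "\<lambda>k. (shift a t)$k"] split[of "\<lambda>k. t$k"] n_other_pos by simp
qed

lemma shift_in_std_simplex:
  assumes "t \<in> std_simplex" "0 \<le> t$i + a" "a \<le> \<mu> t"
  shows "shift a t \<in> std_simplex"
proof -
  have "a / n_other \<le> min_other t"
    using assms(3) n_other_pos by (simp add: \<mu>_def pos_divide_le_eq mult.commute)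
  then have "0 \<le> (shift a t)$c" for c
    using assms(2) min_other_le[of c t] by (cases "c = i") auto
  then show ?thesis using assms(1) sum_shift unfolding std_simplex_def by auto
qed

lemma \<tau>_in: "p \<in> V \<Longrightarrow> \<tau> c p \<in> V" and \<tau>_\<tau>: "p \<in> V \<Longrightarrow> \<tau> c (\<tau> c p) = p"
  using invol unfolding involutive_on_def by auto

lemma \<tau>'_\<tau>': "p \<in> V' \<Longrightarrow> \<tau>' c (\<tau>' c p) = p"
  using invol' unfolding involutive_on_def by auto

lemma x_in: "x \<in> V" and y_in: "y \<in> V"
  using \<tau>_in[OF b_in, of i] \<tau>_in[OF b'_in, of i] b_i b'_i by auto

lemma dipole': "c \<noteq> i \<Longrightarrow> \<tau> c b' = b"
  using \<tau>_\<tau>[OF b_in, of c] dipole[of c] by simp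

lemma x_i: "\<tau> i x = b" and y_i: "\<tau> i y = b'"
  using \<tau>_\<tau>[OF b_in, of i] \<tau>_\<tau>[OF b'_in, of i] b_i b'_i by auto

lemma \<tau>_other_x: "c \<noteq> i \<Longrightarrow> \<tau> c x \<in> V - {b, b'}"
  using \<tau>_in[OF x_in] dipole dipole' \<tau>_\<tau>[OF x_in, of c] distinct(2,3) by (metis DiffI insertE singletonD)

lemma pt_glue: "p \<in> V \<Longrightarrow> t$c = 0 \<Longrightarrow> pt V \<tau> p t = pt V \<tau> (\<tau> c p) t"
  by (rule pt_eq_if_glue[OF invol]) (auto simp: glue_def)

lemma pt'_glue: "p \<in> V' \<Longrightarrow> t$c = 0 \<Longrightarrow> pt V' \<tau>' p t = pt V' \<tau>' (\<tau>' c p) t"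
  by (rule pt_eq_if_glue[OF invol']) (auto simp: glue_def)

lemma pt_x_b: "t$i = 0 \<Longrightarrow> pt V \<tau> x t = pt V \<tau> b t"
  using pt_glue[OF b_in, of t i] b_i by simp

lemma pt_b'_y: "t$i = 0 \<Longrightarrow> pt V \<tau> b' t = pt V \<tau> y t"
  using pt_glue[OF b'_in, of t i] b'_i by simp

lemma pt_b_b': "\<mu> t = 0 \<Longrightarrow> pt V \<tau> b t = pt V \<tau> b' t"
  using min_other_attained[of t] pt_glue[OF b_in, of t] dipole n_other_pos
  by (metis \<mu>_def mult_eq_0_iff less_irrefl)

definition \<psi>_inv :: "'u \<Rightarrow> 'v" where "\<psi>_inv = inv_into (V - {b, b'}) \<psi>"

lemma \<psi>_in: "u \<in> V - {b, b'} \<Longrightarrow> \<psi> u \<in> V'"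
  using \<psi>_bij bij_betwE by blast

lemma x_in': "x \<in> V - {b, b'}" and y_in': "y \<in> V - {b, b'}"
  using x_in y_in distinct by auto

lemma \<psi>_eq_\<psi>_x: "u \<in> V - {b, b'} \<Longrightarrow> \<psi> u = \<psi> x \<longleftrightarrow> u = x"
  using \<psi>_bij x_in' by (meson bij_betw_imp_inj_on inj_on_contraD)

lemma \<psi>_inv_in: "u \<in> V' \<Longrightarrow> \<psi>_inv u \<in> V - {b, b'}"
  unfolding \<psi>_inv_def using \<psi>_bij by (metis bij_betw_def inv_into_into)

lemma \<psi>_\<psi>_inv: "u \<in> V' \<Longrightarrow> \<psi> (\<psi>_inv u) = u"
  unfolding \<psi>_inv_def using \<psi>_bij by (metis bij_betw_def f_inv_into_f)

lemma \<psi>_inv_\<psi>: "u \<in> V - {b, b'} \<Longrightarrow> \<psi>_inv (\<psi> u) = u"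
  unfolding \<psi>_inv_def using \<psi>_bij by (simp add: bij_betw_def)

text \<open>The simplices of \<open>x\<close>, \<open>b\<close> and \<open>b'\<close> are mapped onto the layers
  \<open>2 \<mu> \<le> t$i\<close>, \<open>\<mu> \<le> 2 t$i \<le> 4 \<mu>\<close> and \<open>2 t$i \<le> \<mu>\<close> of the simplex of \<open>\<psi> x\<close>.\<close>

definition collapse :: "'v \<Rightarrow> real^'c \<Rightarrow> ('u \<times> (real^'c)) set" where
  "collapse v t =
     (if v = x then pt V' \<tau>' (\<psi> x) (shift (2 * \<mu> t / 3) t)
      else if v = b then pt V' \<tau>' (\<psi> x) (shift ((2 * \<mu> t - 2 * t$i) / 3) t)
      else if v = b' then pt V' \<tau>' (\<psi> x) (shift (- 2 * t$i / 3) t)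
      else pt V' \<tau>' (\<psi> v) t)"

definition expand :: "'u \<Rightarrow> real^'c \<Rightarrow> ('v \<times> (real^'c)) set" where
  "expand u t =
     (if u = \<psi> x then
        (if 2 * t$i \<le> \<mu> t then pt V \<tau> b' (shift (2 * t$i) t)
         else if t$i \<le> 2 * \<mu> t then pt V \<tau> b (shift (2 * \<mu> t - 2 * t$i) t)
         else pt V \<tau> x (shift (- 2 * \<mu> t) t))
      else pt V \<tau> (\<psi>_inv u) t)"

lemma collapse_glue_dipole:
  assumes t: "t \<in> std_simplex" and p: "p \<in> {x, b, b'}" and tc: "t$c = 0"
  shows "collapse p t = collapse (\<tau> c p) t"
proof (cases "c = i")
  case True
  then have ti: "t$i = 0" using tc by simp
  consider "p = x" | "p = b" | "p = b'" using p by blast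
  then show ?thesis
  proof cases
    case 3
    have "collapse p t = pt V' \<tau>' (\<psi> x) t" using 3 distinct ti unfolding collapse_def by simp
    also have "\<dots> = pt V' \<tau>' (\<psi> y) t" using pt'_glue[OF \<psi>_in[OF x_in'], of t i] ti \<psi>_x by simp
    also have "\<dots> = collapse (\<tau> c p) t" using 3 True b'_i distinct unfolding collapse_def by simp
    finally show ?thesis .
  qed (use True ti distinct x_i b_i in \<open>simp_all add: collapse_def\<close>)
next
  case False
  have \<mu>0: "\<mu> t = 0" using \<mu>_eq_0[OF t False tc] .
  consider "p = x" | "p = b" | "p = b'" using p by blast
  then show ?thesis
  proof cases
    case 1
    have s: "\<tau> c x \<in> V - {b, b'}" using \<tau>_other_x[OF False] .
    show ?thesis
    proof (cases "\<tau> c x = x")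
      case sx: False
      have "collapse p t = pt V' \<tau>' (\<psi> x) t" using 1 \<mu>0 unfolding collapse_def by simp
      also have "\<dots> = pt V' \<tau>' (\<tau>' c (\<psi> x)) t" using pt'_glue[OF \<psi>_in[OF x_in'] tc] .
      also have "\<tau>' c (\<psi> x) = \<psi> (\<tau> c x)" using \<psi>_hom[OF x_in'] False by blast
      also have "pt V' \<tau>' (\<psi> (\<tau> c x)) t = collapse (\<tau> c p) t"
        using 1 sx s unfolding collapse_def by auto
      finally show ?thesis .
    qed (use 1 in simp)
  qed (use \<mu>0 dipole[OF False] dipole'[OF False] distinct in \<open>simp_all add: collapse_def\<close>)
qed

lemma collapse_glue_other:
  assumes p: "p \<in> V" "p \<notin> {x, b, b'}" and s: "\<tau> c p \<notin> {x, b, b'}" and tc: "t$c = 0"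
  shows "collapse p t = collapse (\<tau> c p) t"
proof -
  have pV: "p \<in> V - {b, b'}" using p by auto
  have "c = i \<Longrightarrow> p \<noteq> x \<and> p \<noteq> y" using p s y_i by auto
  then have h: "\<tau>' c (\<psi> p) = \<psi> (\<tau> c p)" using \<psi>_hom[OF pV] by blast
  have "collapse p t = pt V' \<tau>' (\<psi> p) t" using p unfolding collapse_def by auto
  also have "\<dots> = pt V' \<tau>' (\<psi> (\<tau> c p)) t" using pt'_glue[OF \<psi>_in[OF pV] tc] h by simp
  also have "\<dots> = collapse (\<tau> c p) t" using s unfolding collapse_def by auto
  finally show ?thesis .
qed

lemma collapse_respects_glue:
  assumes t: "t \<in> std_simplex" and g: "glue V \<tau> t p s"
  shows "collapse p t = collapse s t"
proof -
  from g obtain c where pV: "p \<in> V" and tc: "t$c = 0" and s: "s = \<tau> c p"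
    unfolding glue_def by blast
  consider "p \<in> {x, b, b'}" | "s \<in> {x, b, b'}" | "p \<notin> {x, b, b'}" "s \<notin> {x, b, b'}" by blast
  then show ?thesis
  proof cases
    case 1 then show ?thesis using collapse_glue_dipole[OF t _ tc] s by simp
  next
    case 2 then show ?thesis using collapse_glue_dipole[OF t _ tc] s \<tau>_\<tau>[OF pV] by metis
  next
    case 3 then show ?thesis using collapse_glue_other[OF pV _ _ tc] s by simp
  qed
qed

lemma expand_\<psi>x_facet_i: "t \<in> std_simplex \<Longrightarrow> t$i = 0 \<Longrightarrow> expand (\<psi> x) t = pt V \<tau> b' t"
  using \<mu>_nonneg[of t] unfolding expand_def by simp

lemma expand_glue_\<psi>x:
  assumes t: "t \<in> std_simplex" and tc: "t$c = 0"
  shows "expand (\<psi> x) t = expand (\<tau>' c (\<psi> x)) t"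
proof (cases "c = i")
  case True
  then have ti: "t$i = 0" using tc by simp
  have "expand (\<psi> x) t = pt V \<tau> b' t" using expand_\<psi>x_facet_i[OF t ti] .
  also have "\<dots> = pt V \<tau> y t" using pt_b'_y[OF ti] .
  also have "\<dots> = expand (\<tau>' c (\<psi> x)) t"
    using True \<psi>_x \<psi>_eq_\<psi>_x[OF y_in'] distinct \<psi>_inv_\<psi>[OF y_in'] unfolding expand_def by simp
  finally show ?thesis .
next
  case False
  have m0: "\<mu> t = 0" using \<mu>_eq_0[OF t False tc] .
  let ?s = "\<tau> c x"
  have h: "\<tau>' c (\<psi> x) = \<psi> ?s" using \<psi>_hom[OF x_in'] False by blast
  have sV: "?s \<in> V - {b, b'}" using \<tau>_other_x[OF False] .
  show ?thesis
  proof (cases "?s = x")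
    case sx: False
    have R: "expand (\<tau>' c (\<psi> x)) t = pt V \<tau> ?s t"
      using h \<psi>_eq_\<psi>_x[OF sV] sx \<psi>_inv_\<psi>[OF sV] unfolding expand_def by simp
    have xs: "pt V \<tau> x t = pt V \<tau> ?s t" using pt_glue[OF x_in tc] .
    show ?thesis
    proof (cases "t$i = 0")
      case True
      then show ?thesis using R xs expand_\<psi>x_facet_i[OF t True] pt_b_b'[OF m0] pt_x_b by simp
    next
      case False
      then have "t$i > 0" using std_simplex_nonneg[OF t, of i] by simp
      then have "expand (\<psi> x) t = pt V \<tau> x t" using m0 unfolding expand_def by simp
      then show ?thesis using R xs by simp
    qed
  qed (use h in simp)
qed

lemma \<tau>_avoids_dipole:
  assumes u: "u \<in> V - {b, b'}" "u \<noteq> x" and uy: "c = i \<Longrightarrow> u \<noteq> y"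
  shows "\<tau> c u \<in> V - {b, b'}"
proof -
  have "\<tau> c u \<noteq> b"
  proof
    assume "\<tau> c u = b"
    then have "u = \<tau> c b" using \<tau>_\<tau>[of u c] u by auto
    then show False using u dipole b_i by (cases "c = i") auto
  qed
  moreover have "\<tau> c u \<noteq> b'"
  proof
    assume "\<tau> c u = b'"
    then have "u = \<tau> c b'" using \<tau>_\<tau>[of u c] u by auto
    then show False using u uy dipole' b'_i by (cases "c = i") auto
  qed
  ultimately show ?thesis using \<tau>_in u by auto
qed

lemma expand_glue_other:
  assumes p: "p \<in> V'" "p \<noteq> \<psi> x" and s: "\<tau>' c p \<noteq> \<psi> x" and tc: "t$c = 0"
  shows "expand p t = expand (\<tau>' c p) t"
proof -
  define u where "u = \<psi>_inv p"
  have uV: "u \<in> V - {b, b'}" using \<psi>_inv_in[OF p(1)] u_def by simp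
  have pu: "p = \<psi> u" using \<psi>_\<psi>_inv[OF p(1)] u_def by simp
  have ux: "u \<noteq> x" using p(2) pu by auto
  have uy: "c = i \<Longrightarrow> u \<noteq> y" using s pu \<psi>_y by auto
  have h: "\<tau>' c p = \<psi> (\<tau> c u)" using \<psi>_hom[OF uV] ux uy pu by blast
  have "expand p t = pt V \<tau> u t" using p(2) unfolding expand_def u_def by simp
  also have "\<dots> = pt V \<tau> (\<tau> c u) t" using pt_glue uV tc by auto
  also have "\<dots> = expand (\<tau>' c p) t"
    using s h \<psi>_inv_\<psi>[OF \<tau>_avoids_dipole[OF uV ux uy]] unfolding expand_def by simp
  finally show ?thesis .
qed

lemma expand_respects_glue:
  assumes t: "t \<in> std_simplex" and g: "glue V' \<tau>' t p s"
  shows "expand p t = expand s t"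
proof -
  from g obtain c where pV: "p \<in> V'" and tc: "t$c = 0" and s: "s = \<tau>' c p"
    unfolding glue_def by blast
  consider "p = \<psi> x" | "s = \<psi> x" | "p \<noteq> \<psi> x" "s \<noteq> \<psi> x" by blast
  then show ?thesis
  proof cases
    case 1 then show ?thesis using expand_glue_\<psi>x[OF t tc] s by simp
  next
    case 2 then show ?thesis using expand_glue_\<psi>x[OF t tc] s \<tau>'_\<tau>'[OF pV] by metis
  next
    case 3 then show ?thesis using expand_glue_other[OF pV _ _ tc] s by simp
  qed
qed

lemma expand_\<psi>x_lower:
  "2 * t$i \<le> \<mu> t \<Longrightarrow> expand (\<psi> x) t = pt V \<tau> b' (shift (2 * t$i) t)"
  unfolding expand_def by simp

lemma expand_\<psi>x_middle:
  assumes t: "t \<in> std_simplex" and "\<mu> t \<le> 2 * t$i" "t$i \<le> 2 * \<mu> t"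
  shows "expand (\<psi> x) t = pt V \<tau> b (shift (2 * \<mu> t - 2 * t$i) t)"
proof (cases "2 * t$i \<le> \<mu> t")
  case True
  then have e: "2 * t$i = \<mu> t" using assms(2) by simp
  let ?t = "shift (2 * t$i) t"
  have st: "?t \<in> std_simplex"
    by (rule shift_in_std_simplex[OF t]) (use std_simplex_nonneg[OF t, of i] e in auto)
  have "\<mu> ?t = 0" using e by simp
  then have "pt V \<tau> b' ?t = pt V \<tau> b ?t" using pt_b_b' by simp
  then show ?thesis using True e unfolding expand_def by simp
qed (use assms in \<open>simp add: expand_def\<close>)

lemma expand_\<psi>x_upper:
  assumes t: "t \<in> std_simplex" and "2 * \<mu> t \<le> t$i"
  shows "expand (\<psi> x) t = pt V \<tau> x (shift (- 2 * \<mu> t) t)"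
proof -
  have m: "0 \<le> \<mu> t" using \<mu>_nonneg[OF t] .
  consider "2 * t$i \<le> \<mu> t" | "\<not> 2 * t$i \<le> \<mu> t" "t$i \<le> 2 * \<mu> t"
    | "\<not> 2 * t$i \<le> \<mu> t" "\<not> t$i \<le> 2 * \<mu> t" by blast
  then show ?thesis
  proof cases
    case 1
    then have "\<mu> t = 0" "t$i = 0" using assms(2) m std_simplex_nonneg[OF t, of i] by auto
    then show ?thesis using 1 pt_b_b' pt_x_b unfolding expand_def by simp
  next
    case 2
    then have e: "t$i = 2 * \<mu> t" using assms(2) by simp
    then have "pt V \<tau> b (shift (- 2 * \<mu> t) t) = pt V \<tau> x (shift (- 2 * \<mu> t) t)"
      using pt_x_b by simp
    then show ?thesis using 2 e unfolding expand_def by simp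
  qed (simp add: expand_def)
qed

lemma collapse_in_realization:
  assumes v: "v \<in> V" and t: "t \<in> std_simplex"
  shows "collapse v t \<in> realization V' \<tau>'"
proof (cases "v \<in> {x, b, b'}")
  case True
  have N: "0 \<le> \<mu> t" and ti: "0 \<le> t$i" using \<mu>_nonneg[OF t] std_simplex_nonneg[OF t] .
  have "shift (2 * \<mu> t / 3) t \<in> std_simplex"
    "shift ((2 * \<mu> t - 2 * t$i) / 3) t \<in> std_simplex"
    "shift (- 2 * t$i / 3) t \<in> std_simplex"
    by (rule shift_in_std_simplex[OF t]; use N ti in \<open>simp add: field_simps\<close>)+
  then show ?thesis
    using True pt_in_realization[OF \<psi>_in[OF x_in']] unfolding collapse_def by auto
qed (use v pt_in_realization[OF \<psi>_in t] in \<open>auto simp: collapse_def\<close>)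

lemma expand_in_realization:
  assumes u: "u \<in> V'" and t: "t \<in> std_simplex"
  shows "expand u t \<in> realization V \<tau>"
proof (cases "u = \<psi> x")
  case True
  have N: "0 \<le> \<mu> t" and ti: "0 \<le> t$i" using \<mu>_nonneg[OF t] std_simplex_nonneg[OF t] .
  consider "2 * t$i \<le> \<mu> t" | "\<not> 2 * t$i \<le> \<mu> t" "t$i \<le> 2 * \<mu> t"
    | "\<not> 2 * t$i \<le> \<mu> t" "\<not> t$i \<le> 2 * \<mu> t" by blast
  then show ?thesis
  proof cases
    case 1
    have "shift (2 * t$i) t \<in> std_simplex" by (rule shift_in_std_simplex[OF t]) (use N ti 1 in auto)
    then show ?thesis using True 1 pt_in_realization[OF b'_in] unfolding expand_def by simp
  next
    case 2
    have "shift (2 * \<mu> t - 2 * t$i) t \<in> std_simplex"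
      by (rule shift_in_std_simplex[OF t]) (use N ti 2 in auto)
    then show ?thesis using True 2 pt_in_realization[OF b_in] unfolding expand_def by simp
  next
    case 3
    have "shift (- 2 * \<mu> t) t \<in> std_simplex" by (rule shift_in_std_simplex[OF t]) (use N ti 3 in auto)
    then show ?thesis using True 3 pt_in_realization[OF x_in] unfolding expand_def by simp
  qed
qed (use pt_in_realization[OF _ t] \<psi>_inv_in[OF u] in \<open>auto simp: expand_def\<close>)

definition collapse_map where "collapse_map = apply_rep collapse"
definition expand_map where "expand_map = apply_rep expand"

lemma collapse_map_pt: "t \<in> std_simplex \<Longrightarrow> collapse_map (pt V \<tau> v t) = collapse v t"
  unfolding collapse_map_def by (rule apply_rep_pt) (rule collapse_respects_glue)

lemma expand_map_pt: "t \<in> std_simplex \<Longrightarrow> expand_map (pt V' \<tau>' u t) = expand u t"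
  unfolding expand_map_def by (rule apply_rep_pt) (rule expand_respects_glue)

lemma expand_collapse_dipole:
  assumes v: "v \<in> {x, b, b'}" and t: "t \<in> std_simplex"
  shows "expand_map (collapse v t) = pt V \<tau> v t"
proof -
  have N: "0 \<le> \<mu> t" and ti: "0 \<le> t$i" using \<mu>_nonneg[OF t] std_simplex_nonneg[OF t] .
  consider "v = x" | "v = b" | "v = b'" using v by blast
  then show ?thesis
  proof cases
    case 1
    let ?t = "shift (2 * \<mu> t / 3) t"
    have st: "?t \<in> std_simplex" by (rule shift_in_std_simplex[OF t]) (use N ti in auto)
    have "expand_map (collapse v t) = expand (\<psi> x) ?t"
      using 1 expand_map_pt[OF st] unfolding collapse_def by simp
    also have "\<dots> = pt V \<tau> x (shift (- 2 * \<mu> ?t) ?t)"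
      by (rule expand_\<psi>x_upper[OF st]) (use ti in simp)
    finally show ?thesis using 1 by simp
  next
    case 2
    let ?t = "shift ((2 * \<mu> t - 2 * t$i) / 3) t"
    have st: "?t \<in> std_simplex"
      by (rule shift_in_std_simplex[OF t]) (use N ti in \<open>simp_all add: field_simps\<close>)
    have "expand_map (collapse v t) = expand (\<psi> x) ?t"
      using 2 distinct expand_map_pt[OF st] unfolding collapse_def by simp
    also have "\<dots> = pt V \<tau> b (shift (2 * \<mu> ?t - 2 * ?t$i) ?t)"
      by (rule expand_\<psi>x_middle[OF st]) (use ti N in \<open>simp_all add: field_simps\<close>)
    also have "shift (2 * \<mu> ?t - 2 * ?t$i) ?t = t" by (simp add: field_simps)
    finally show ?thesis using 2 by simp
  next
    case 3
    let ?t = "shift (- 2 * t$i / 3) t"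
    have st: "?t \<in> std_simplex" by (rule shift_in_std_simplex[OF t]) (use N ti in auto)
    have "expand_map (collapse v t) = expand (\<psi> x) ?t"
      using 3 distinct expand_map_pt[OF st] unfolding collapse_def by simp
    also have "\<dots> = pt V \<tau> b' (shift (2 * ?t$i) ?t)"
      by (rule expand_\<psi>x_lower) (use ti N in simp)
    finally show ?thesis using 3 by simp
  qed
qed

lemma expand_collapse:
  assumes v: "v \<in> V" and t: "t \<in> std_simplex"
  shows "expand_map (collapse v t) = pt V \<tau> v t"
proof (cases "v \<in> {x, b, b'}")
  case False
  then have vV: "v \<in> V - {b, b'}" using v by auto
  have "expand_map (collapse v t) = expand (\<psi> v) t"
    using False expand_map_pt[OF t] unfolding collapse_def by simp
  also have "\<dots> = pt V \<tau> v t"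
    using \<psi>_eq_\<psi>_x[OF vV] False \<psi>_inv_\<psi>[OF vV] unfolding expand_def by simp
  finally show ?thesis .
qed (use expand_collapse_dipole t in blast)

lemma collapse_expand_\<psi>x:
  assumes t: "t \<in> std_simplex"
  shows "collapse_map (expand (\<psi> x) t) = pt V' \<tau>' (\<psi> x) t"
proof -
  have N: "0 \<le> \<mu> t" and ti: "0 \<le> t$i" using \<mu>_nonneg[OF t] std_simplex_nonneg[OF t] .
  consider "2 * t$i \<le> \<mu> t" | "\<not> 2 * t$i \<le> \<mu> t" "t$i \<le> 2 * \<mu> t"
    | "\<not> 2 * t$i \<le> \<mu> t" "\<not> t$i \<le> 2 * \<mu> t" by blast
  then show ?thesis
  proof cases
    case 1
    let ?t = "shift (2 * t$i) t"
    have st: "?t \<in> std_simplex" by (rule shift_in_std_simplex[OF t]) (use N ti 1 in auto)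
    have "collapse_map (expand (\<psi> x) t) = collapse b' ?t"
      using 1 collapse_map_pt[OF st] unfolding expand_def by simp
    also have "\<dots> = pt V' \<tau>' (\<psi> x) (shift (- 2 * ?t$i / 3) ?t)"
      using distinct unfolding collapse_def by simp
    finally show ?thesis by simp
  next
    case 2
    let ?t = "shift (2 * \<mu> t - 2 * t$i) t"
    have st: "?t \<in> std_simplex" by (rule shift_in_std_simplex[OF t]) (use N ti 2 in auto)
    have "collapse_map (expand (\<psi> x) t) = collapse b ?t"
      using 2 collapse_map_pt[OF st] unfolding expand_def by simp
    also have "\<dots> = pt V' \<tau>' (\<psi> x) (shift ((2 * \<mu> ?t - 2 * ?t$i) / 3) ?t)"
      using distinct unfolding collapse_def by simp
    also have "shift ((2 * \<mu> ?t - 2 * ?t$i) / 3) ?t = t" by (simp add: field_simps)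
    finally show ?thesis .
  next
    case 3
    let ?t = "shift (- 2 * \<mu> t) t"
    have st: "?t \<in> std_simplex" by (rule shift_in_std_simplex[OF t]) (use N ti 3 in auto)
    have "collapse_map (expand (\<psi> x) t) = collapse x ?t"
      using 3 collapse_map_pt[OF st] unfolding expand_def by simp
    also have "\<dots> = pt V' \<tau>' (\<psi> x) (shift (2 * \<mu> ?t / 3) ?t)"
      unfolding collapse_def by simp
    finally show ?thesis by simp
  qed
qed

lemma collapse_expand:
  assumes u: "u \<in> V'" and t: "t \<in> std_simplex"
  shows "collapse_map (expand u t) = pt V' \<tau>' u t"
proof (cases "u = \<psi> x")
  case False
  define v where "v = \<psi>_inv u"
  have vV: "v \<in> V - {b, b'}" using \<psi>_inv_in[OF u] v_def by simp
  have vx: "v \<noteq> x" using False \<psi>_\<psi>_inv[OF u] v_def by auto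
  have "collapse_map (expand u t) = collapse v t"
    using False collapse_map_pt[OF t] unfolding expand_def v_def by simp
  also have "\<dots> = pt V' \<tau>' u t" using vV vx \<psi>_\<psi>_inv[OF u] unfolding collapse_def v_def by auto
  finally show ?thesis .
qed (use collapse_expand_\<psi>x[OF t] in simp)

text \<open>On \<open>cell c \<dots>\<close> the minimum defining \<open>\<mu>\<close> is attained at the colour \<open>c\<close>, so \<open>\<mu>\<close> is
  linear there.\<close>

definition cell :: "'c \<Rightarrow> real \<Rightarrow> real \<Rightarrow> real \<Rightarrow> real \<Rightarrow> (real^'c) set" where
  "cell c a1 a2 a3 a4 = std_simplex \<inter> {t. \<forall>c'. c' \<noteq> i \<longrightarrow> t$c \<le> t$c'}
     \<inter> {t. a1 * t$i \<le> a2 * t$c} \<inter> {t. a3 * t$i \<le> a4 * t$c}"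

lemma polytope_cell: "polytope (cell c a1 a2 a3 a4)"
proof -
  have e: "{t::real^'c. \<forall>c'. c' \<noteq> i \<longrightarrow> t$c \<le> t$c'} = (\<Inter>c'\<in>UNIV-{i}. {t. 1 * t$c \<le> 1 * t$c'})"
    by auto
  have "polyhedron {t::real^'c. \<forall>c'. c' \<noteq> i \<longrightarrow> t$c \<le> t$c'}"
    unfolding e by (rule polyhedron_Inter) (auto intro: polyhedron_coord_le[of 1 c 1, simplified])
  then show ?thesis
    unfolding polytope_eq_bounded_polyhedron cell_def
    using polyhedron_std_simplex bounded_std_simplex polyhedron_coord_le
    by (intro conjI polyhedron_Int bounded_Int) auto
qed

lemma cell_subset: "cell c a1 a2 a3 a4 \<subseteq> std_simplex"
  unfolding cell_def by blast

lemma \<mu>_cell: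
  assumes "t \<in> cell c a1 a2 a3 a4" "c \<noteq> i"
  shows "\<mu> t = n_other * t$c"
proof -
  have "min_other t = t$c"
    by (rule min_other_eqI[of _ _ c]) (use assms in \<open>auto simp: cell_def\<close>)
  then show ?thesis unfolding \<mu>_def by simp
qed

lemma in_some_cell:
  assumes "t \<in> std_simplex"
  shows "\<exists>c. c \<noteq> i \<and> t \<in> cell c 0 0 0 0"
proof -
  obtain c where c: "c \<noteq> i" "min_other t = t$c" using min_other_attained by blast
  then have "t \<in> cell c 0 0 0 0"
    using assms min_other_le[of _ t] unfolding cell_def by auto
  then show ?thesis using c by blast
qed

lemma linear_coords: "linear (\<lambda>t::real^'c. k1 * t$c + k2 * t$i)"
  by (rule linearI) (simp_all add: algebra_simps)

lemma affine_shift: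
  assumes "linear g"
  shows "\<exists>A b. linear A \<and> (\<forall>t\<in>K. shift (g t) t = A t + b)"
proof -
  define d :: "real^'c" where "d = (\<chi> k. if k = i then 1 else - 1 / n_other)"
  have "shift a t = t + a *\<^sub>R d" for a t
    unfolding shift_def d_def by (simp add: vec_eq_iff)
  moreover have "linear (\<lambda>t. t + g t *\<^sub>R d)"
    using assms by (intro linearI) (simp_all add: linear_add linear_scale algebra_simps scaleR_add_left)
  ultimately show ?thesis by (intro exI[of _ "\<lambda>t. t + g t *\<^sub>R d"] exI[of _ 0]) simp
qed

lemma PL_map_collapse: "PL_map V \<tau> V' \<tau>' collapse_map"
proof (rule PL_mapI)
  show "collapse_map (pt V \<tau> v t) \<in> realization V' \<tau>'" if "v \<in> V" "t \<in> std_simplex" for v t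
    using collapse_map_pt collapse_in_realization that by simp
  fix v assume v: "v \<in> V"
  show "\<exists>(J :: 'c set) K u L. affine_pieces V' \<tau>' (\<lambda>t. collapse_map (pt V \<tau> v t)) J K u L"
  proof (cases "v \<in> {x, b, b'}")
    case False
    then have "collapse_map (pt V \<tau> v t) = pt V' \<tau>' (\<psi> v) t" if "t \<in> std_simplex" for t
      using collapse_map_pt[OF that] unfolding collapse_def by auto
    then have "affine_pieces V' \<tau>' (\<lambda>t. collapse_map (pt V \<tau> v t)) {i} (\<lambda>_. std_simplex)
        (\<lambda>_. \<psi> v) (\<lambda>_ t. t)"
      using v False \<psi>_in by (intro affine_pieces_single) auto
    then show ?thesis by blast
  next
    case True
    define k1 where "k1 = (if v = b' then 0 else 2 * n_other / 3)"
    define k2 :: real where "k2 = (if v = x then 0 else - 2 / 3)"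
    have "affine_pieces V' \<tau>' (\<lambda>t. collapse_map (pt V \<tau> v t)) (UNIV - {i}) (\<lambda>c. cell c 0 0 0 0)
        (\<lambda>_. \<psi> x) (\<lambda>c t. shift (k1 * t$c + k2 * t$i) t)"
      unfolding affine_pieces_def
    proof (intro conjI ballI)
      show "finite (UNIV - {i})" by simp
      show "(\<Union>c\<in>UNIV - {i}. cell c 0 0 0 0) = std_simplex"
        using in_some_cell cell_subset by (fastforce dest: in_some_cell)
      fix c assume c: "c \<in> UNIV - {i}"
      show "polytope (cell c 0 0 0 0)" by (rule polytope_cell)
      show "\<psi> x \<in> V'" using \<psi>_in[OF x_in'] .
      show "\<exists>A b. linear A \<and> (\<forall>t\<in>cell c 0 0 0 0. shift (k1 * t$c + k2 * t$i) t = A t + b)"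
        using affine_shift[OF linear_coords] .
      fix t assume t: "t \<in> cell c 0 0 0 0"
      then have "collapse_map (pt V \<tau> v t) = collapse v t"
        using collapse_map_pt cell_subset by blast
      also have "\<dots> = pt V' \<tau>' (\<psi> x) (shift (k1 * t$c + k2 * t$i) t)"
      proof -
        have "\<mu> t = n_other * t$c" using \<mu>_cell[OF t] c by simp
        then show ?thesis
          using True distinct unfolding collapse_def k1_def k2_def
          by (elim insertE) (simp_all add: field_simps)
      qed
      finally show "collapse_map (pt V \<tau> v t) = pt V' \<tau>' (\<psi> x) (shift (k1 * t$c + k2 * t$i) t)" .
    qed
    then show ?thesis by blast
  qed
qed

definition layer_cell :: "'c \<Rightarrow> layer \<Rightarrow> (real^'c) set" where
  "layer_cell c l = (case l of
      Lower \<Rightarrow> cell c 2 n_other 0 0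
    | Middle \<Rightarrow> cell c (- 2) (- n_other) 1 (2 * n_other)
    | Upper \<Rightarrow> cell c (- 1) (- 2 * n_other) 0 0)"

lemma layer_cell_subset: "layer_cell c l \<subseteq> std_simplex"
  by (cases l) (simp_all add: layer_cell_def cell_subset)

lemma layer_cells_cover: "(\<Union>(c, l)\<in>(UNIV - {i}) \<times> UNIV. layer_cell c l) = std_simplex"
proof
  show "(\<Union>(c, l)\<in>(UNIV - {i}) \<times> UNIV. layer_cell c l) \<subseteq> std_simplex"
    using layer_cell_subset by blast
  show "std_simplex \<subseteq> (\<Union>(c, l)\<in>(UNIV - {i}) \<times> UNIV. layer_cell c l)"
  proof
    fix t :: "real^'c" assume "t \<in> std_simplex"
    then obtain c where c: "c \<noteq> i" "t \<in> cell c 0 0 0 0" using in_some_cell by blast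
    then have "t \<in> layer_cell c Lower \<or> t \<in> layer_cell c Middle \<or> t \<in> layer_cell c Upper"
      unfolding layer_cell_def cell_def by auto
    then show "t \<in> (\<Union>(c, l)\<in>(UNIV - {i}) \<times> UNIV. layer_cell c l)" using c(1) by blast
  qed
qed

definition layer_vertex :: "layer \<Rightarrow> 'v" where
  "layer_vertex l = (case l of Lower \<Rightarrow> b' | Middle \<Rightarrow> b | Upper \<Rightarrow> x)"

definition layer_amount :: "layer \<Rightarrow> 'c \<Rightarrow> real^'c \<Rightarrow> real" where
  "layer_amount l c t = (case l of
      Lower \<Rightarrow> 2 * t$i
    | Middle \<Rightarrow> 2 * n_other * t$c - 2 * t$i
    | Upper \<Rightarrow> - 2 * n_other * t$c)"

lemma linear_layer_amount: "linear (layer_amount l c)"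
  using linear_coords[of 0 c 2] linear_coords[of "2 * n_other" c "- 2"] linear_coords[of "- 2 * n_other" c 0]
  unfolding layer_amount_def by (cases l) (simp_all add: algebra_simps)

lemma expand_\<psi>x_layer:
  assumes t: "t \<in> layer_cell c l" and c: "c \<noteq> i"
  shows "expand (\<psi> x) t = pt V \<tau> (layer_vertex l) (shift (layer_amount l c t) t)"
proof -
  have ts: "t \<in> std_simplex" using t layer_cell_subset by blast
  have \<mu>t: "\<mu> t = n_other * t$c"
    using t \<mu>_cell[OF _ c] unfolding layer_cell_def by (cases l) auto
  show ?thesis
  proof (cases l)
    case Lower
    then show ?thesis using t \<mu>t expand_\<psi>x_lower
      unfolding layer_cell_def cell_def layer_vertex_def layer_amount_def by simp
  next
    case Middle
    then show ?thesis using t \<mu>t expand_\<psi>x_middle[OF ts]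
      unfolding layer_cell_def cell_def layer_vertex_def layer_amount_def by (simp add: algebra_simps)
  next
    case Upper
    then show ?thesis using t \<mu>t expand_\<psi>x_upper[OF ts]
      unfolding layer_cell_def cell_def layer_vertex_def layer_amount_def by (simp add: algebra_simps)
  qed
qed

lemma PL_map_expand: "PL_map V' \<tau>' V \<tau> expand_map"
proof (rule PL_mapI)
  show "expand_map (pt V' \<tau>' u t) \<in> realization V \<tau>" if "u \<in> V'" "t \<in> std_simplex" for u t
    using expand_map_pt expand_in_realization that by simp
  fix u assume u: "u \<in> V'"
  show "\<exists>(J :: ('c \<times> layer) set) K v L. affine_pieces V \<tau> (\<lambda>t. expand_map (pt V' \<tau>' u t)) J K v L"
  proof (cases "u = \<psi> x")
    case False
    then have "expand_map (pt V' \<tau>' u t) = pt V \<tau> (\<psi>_inv u) t" if "t \<in> std_simplex" for t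
      using expand_map_pt[OF that] unfolding expand_def by auto
    then have "affine_pieces V \<tau> (\<lambda>t. expand_map (pt V' \<tau>' u t)) {(i, Lower)} (\<lambda>_. std_simplex)
        (\<lambda>_. \<psi>_inv u) (\<lambda>_ t. t)"
      using u \<psi>_inv_in by (intro affine_pieces_single) auto
    then show ?thesis by blast
  next
    case True
    have "affine_pieces V \<tau> (\<lambda>t. expand_map (pt V' \<tau>' u t)) ((UNIV - {i}) \<times> UNIV)
        (\<lambda>(c, l). layer_cell c l) (\<lambda>(c, l). layer_vertex l) (\<lambda>(c, l) t. shift (layer_amount l c t) t)"
      unfolding affine_pieces_def
    proof (intro conjI ballI)
      show "finite ((UNIV - {i}) \<times> (UNIV :: layer set))"
        using finite_UNIV_layer by simp
      show "(\<Union>j\<in>(UNIV - {i}) \<times> UNIV. case j of (c, l) \<Rightarrow> layer_cell c l) = std_simplex"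
        using layer_cells_cover by simp
      fix j assume j: "j \<in> (UNIV - {i}) \<times> (UNIV :: layer set)"
      obtain c l where jcl: "j = (c, l)" by fastforce
      with j have c: "c \<noteq> i" by simp
      show "polytope (case j of (c, l) \<Rightarrow> layer_cell c l)"
        unfolding jcl layer_cell_def by (simp add: polytope_cell split: layer.split)
      show "(case j of (c, l) \<Rightarrow> layer_vertex l) \<in> V"
        unfolding jcl layer_vertex_def using b_in b'_in x_in by (simp split: layer.split)
      show "\<exists>A b. linear A \<and> (\<forall>t\<in>case j of (c, l) \<Rightarrow> layer_cell c l.
          (case j of (c, l) \<Rightarrow> \<lambda>t. shift (layer_amount l c t) t) t = A t + b)"
        unfolding jcl using affine_shift[OF linear_layer_amount] by simp
      fix t assume "t \<in> (case j of (c, l) \<Rightarrow> layer_cell c l)"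
      then have t: "t \<in> layer_cell c l" unfolding jcl by simp
      then have "expand_map (pt V' \<tau>' u t) = expand (\<psi> x) t"
        using expand_map_pt True layer_cell_subset by blast
      then show "expand_map (pt V' \<tau>' u t) = pt V \<tau> (case j of (c, l) \<Rightarrow> layer_vertex l)
          ((case j of (c, l) \<Rightarrow> \<lambda>t. shift (layer_amount l c t) t) t)"
        unfolding jcl using expand_\<psi>x_layer[OF t c] by simp
    qed
    then show ?thesis by blast
  qed
qed

theorem PL_homeomorphic_dipole_removal: "PL_homeomorphic V \<tau> V' \<tau>'"
proof (rule PL_homeomorphicI[OF PL_map_collapse PL_map_expand])
  fix P assume "P \<in> realization V \<tau>"
  then obtain v t where "v \<in> V" "t \<in> std_simplex" "P = pt V \<tau> v t"
    unfolding realization_def by blast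
  then show "expand_map (collapse_map P) = P" using collapse_map_pt expand_collapse by simp
next
  fix Q assume "Q \<in> realization V' \<tau>'"
  then obtain u t where "u \<in> V'" "t \<in> std_simplex" "Q = pt V' \<tau>' u t"
    unfolding realization_def by blast
  then show "collapse_map (expand_map Q) = Q" using expand_map_pt collapse_expand by simp
qed

end

section \<open>Rooted bipartite coloured graphs\<close>

context
  fixes V :: "'v set" and \<sigma> :: "'c option \<Rightarrow> 'v \<Rightarrow> 'v" and r :: 'v
  assumes G: "Gq V \<sigma> r"
begin

lemma Gq_finite: "finite V"
  and Gq_root_in: "r \<in> V"
  and Gq_\<sigma>_in: "v \<in> V \<Longrightarrow> \<sigma> a v \<in> V"
  and Gq_\<sigma>_neq: "v \<in> V \<Longrightarrow> \<sigma> a v \<noteq> v"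
  and Gq_\<sigma>_\<sigma>: "v \<in> V \<Longrightarrow> \<sigma> a (\<sigma> a v) = v"
  and Gq_connected: "u \<in> V \<Longrightarrow> v \<in> V \<Longrightarrow> (\<lambda>p s. \<exists>a. s = \<sigma> a p)\<^sup>*\<^sup>* u v"
  using G unfolding Gq_def colored_graph_def by auto

lemma is_black_imp_colouring:
  assumes bl: "bl r" "\<forall>a. \<forall>v\<in>V. bl (\<sigma> a v) \<longleftrightarrow> \<not> bl v" and "is_black \<sigma> r v"
  shows "v \<in> V \<and> bl v"
  using assms(3) unfolding is_black_def
proof (induction rule: rtranclp_induct)
  case (step y z)
  then obtain a c where "z = \<sigma> c (\<sigma> a y)" by blast
  with step.IH show ?case using Gq_\<sigma>_in bl(2) by auto
qed (use Gq_root_in bl in simp)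

lemma is_black_\<sigma>_\<sigma>: "is_black \<sigma> r v \<Longrightarrow> is_black \<sigma> r (\<sigma> c (\<sigma> a v))"
  unfolding is_black_def by (rule rtranclp.rtrancl_into_rtrancl) blast+

lemma is_black_iff_colouring:
  assumes bl: "bl r" "\<forall>a. \<forall>v\<in>V. bl (\<sigma> a v) \<longleftrightarrow> \<not> bl v" and v: "v \<in> V"
  shows "is_black \<sigma> r v \<longleftrightarrow> bl v"
proof
  assume "is_black \<sigma> r v" then show "bl v" using is_black_imp_colouring[OF bl] by blast
next
  assume bv: "bl v"
  have "z \<in> V \<and> (bl z \<longrightarrow> is_black \<sigma> r z) \<and> (\<not> bl z \<longrightarrow> (\<forall>a. is_black \<sigma> r (\<sigma> a z)))"
    if "(\<lambda>p s. \<exists>a. s = \<sigma> a p)\<^sup>*\<^sup>* r z" for z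
    using that
  proof (induction rule: rtranclp_induct)
    case base then show ?case using Gq_root_in bl unfolding is_black_def by simp
  next
    case (step y z)
    then obtain a where z: "z = \<sigma> a y" by blast
    have yV: "y \<in> V" using step.IH by simp
    show ?case
    proof (cases "bl z")
      case True
      then show ?thesis using step.IH z bl(2) yV Gq_\<sigma>_in by auto
    next
      case False
      then have "is_black \<sigma> r y" using step.IH z bl(2) yV by auto
      then show ?thesis using is_black_\<sigma>_\<sigma>[of y _ a] False z yV Gq_\<sigma>_in by auto
    qed
  qed
  then show "is_black \<sigma> r v" using Gq_connected[OF Gq_root_in v] bv by blast
qed

lemma is_black_root: "is_black \<sigma> r r"
  unfolding is_black_def by simp

lemma Gq_colouring:
  obtains bl where "bl r" "\<forall>a. \<forall>v\<in>V. bl (\<sigma> a v) \<longleftrightarrow> \<not> bl v"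
  using G unfolding Gq_def by blast

lemma is_black_in: "is_black \<sigma> r v \<Longrightarrow> v \<in> V"
  by (rule Gq_colouring) (use is_black_imp_colouring in blast)

lemma is_black_\<sigma>: "v \<in> V \<Longrightarrow> is_black \<sigma> r (\<sigma> a v) \<longleftrightarrow> \<not> is_black \<sigma> r v"
proof (rule Gq_colouring)
  fix bl assume bl: "bl r" "\<forall>a. \<forall>v\<in>V. bl (\<sigma> a v) \<longleftrightarrow> \<not> bl v" and v: "v \<in> V"
  have "is_black \<sigma> r (\<sigma> a v) \<longleftrightarrow> bl (\<sigma> a v)" using is_black_iff_colouring[OF bl Gq_\<sigma>_in[OF v]] .
  also have "\<dots> \<longleftrightarrow> \<not> bl v" using bl(2) v by blast
  also have "\<dots> \<longleftrightarrow> \<not> is_black \<sigma> r v" using is_black_iff_colouring[OF bl v] by blast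
  finally show ?thesis .
qed

end

text \<open>Two graphs with the same constellation: matching black vertices through the white
  vertices they correspond to, and white vertices through their colour-0 partners, gives an
  isomorphism.\<close>

locale same_constellation =
  fixes V1 :: "'v set" and \<sigma>1 :: "'c option \<Rightarrow> 'v \<Rightarrow> 'v" and r1 :: 'v
    and V2 :: "'u set" and \<sigma>2 :: "'c option \<Rightarrow> 'u \<Rightarrow> 'u" and r2 :: 'u
    and W :: "'w set" and succ :: "'c \<Rightarrow> 'w \<Rightarrow> 'w" and \<phi>1 :: "'v \<Rightarrow> 'w" and \<phi>2 :: "'u \<Rightarrow> 'w"
  assumes G1: "Gq V1 \<sigma>1 r1" and G2: "Gq V2 \<sigma>2 r2"
    and \<phi>1_bij: "bij_betw \<phi>1 {v\<in>V1. is_black \<sigma>1 r1 v} W"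
    and \<phi>1_succ: "\<And>c v. v \<in> {v\<in>V1. is_black \<sigma>1 r1 v} \<Longrightarrow> \<phi>1 (\<sigma>1 None (\<sigma>1 (Some c) v)) = succ c (\<phi>1 v)"
    and \<phi>2_bij: "bij_betw \<phi>2 {v\<in>V2. is_black \<sigma>2 r2 v} W"
    and \<phi>2_succ: "\<And>c v. v \<in> {v\<in>V2. is_black \<sigma>2 r2 v} \<Longrightarrow> \<phi>2 (\<sigma>2 None (\<sigma>2 (Some c) v)) = succ c (\<phi>2 v)"
begin

definition iso :: "'v \<Rightarrow> 'u" where
  "iso v = (if is_black \<sigma>1 r1 v then inv_into {v\<in>V2. is_black \<sigma>2 r2 v} \<phi>2 (\<phi>1 v)
     else \<sigma>2 None (inv_into {v\<in>V2. is_black \<sigma>2 r2 v} \<phi>2 (\<phi>1 (\<sigma>1 None v))))"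

lemma iso_black:
  assumes "v \<in> V1" "is_black \<sigma>1 r1 v"
  shows "iso v \<in> V2 \<and> is_black \<sigma>2 r2 (iso v) \<and> \<phi>2 (iso v) = \<phi>1 v"
proof -
  have "\<phi>1 v \<in> W" using assms bij_betwE[OF \<phi>1_bij] by blast
  then have w: "\<phi>1 v \<in> \<phi>2 ` {v\<in>V2. is_black \<sigma>2 r2 v}" using \<phi>2_bij by (simp add: bij_betw_def)
  have "iso v = inv_into {v\<in>V2. is_black \<sigma>2 r2 v} \<phi>2 (\<phi>1 v)" using assms(2) unfolding iso_def by simp
  then show ?thesis using inv_into_into[OF w] f_inv_into_f[OF w] by simp
qed

lemma iso_eq_if_\<phi>_eq:
  assumes "v \<in> V1" "is_black \<sigma>1 r1 v" "u \<in> V2" "is_black \<sigma>2 r2 u" "\<phi>1 v = \<phi>2 u"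
  shows "iso v = u"
proof (rule inj_onD[OF bij_betw_imp_inj_on[OF \<phi>2_bij]])
  show "\<phi>2 (iso v) = \<phi>2 u" "iso v \<in> {v\<in>V2. is_black \<sigma>2 r2 v}"
    using iso_black[OF assms(1,2)] assms(5) by auto
qed (use assms in simp)

lemma iso_white: "v \<in> V1 \<Longrightarrow> \<not> is_black \<sigma>1 r1 v \<Longrightarrow> iso v = \<sigma>2 None (iso (\<sigma>1 None v))"
  using is_black_\<sigma>[OF G1] Gq_\<sigma>_\<sigma>[OF G1] unfolding iso_def by simp

lemma iso_in: "v \<in> V1 \<Longrightarrow> iso v \<in> V2"
proof (cases "is_black \<sigma>1 r1 v")
  case False
  assume v: "v \<in> V1"
  then have "\<sigma>1 None v \<in> V1" "is_black \<sigma>1 r1 (\<sigma>1 None v)"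
    using False is_black_\<sigma>[OF G1] Gq_\<sigma>_in[OF G1] by auto
  then show ?thesis using iso_white[OF v False] iso_black Gq_\<sigma>_in[OF G2] by simp
qed (use iso_black in blast)

lemma iso_\<sigma>_black:
  assumes v: "v \<in> V1" "is_black \<sigma>1 r1 v"
  shows "iso (\<sigma>1 a v) = \<sigma>2 a (iso v)"
proof -
  have av: "\<sigma>1 a v \<in> V1" "\<not> is_black \<sigma>1 r1 (\<sigma>1 a v)"
    using v is_black_\<sigma>[OF G1] Gq_\<sigma>_in[OF G1] by auto
  have iv: "iso v \<in> V2" "is_black \<sigma>2 r2 (iso v)" "\<phi>2 (iso v) = \<phi>1 v" using iso_black[OF v] by auto
  have step: "iso (\<sigma>1 a v) = \<sigma>2 None (iso (\<sigma>1 None (\<sigma>1 a v)))" using iso_white[OF av] .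
  show ?thesis
  proof (cases a)
    case None
    then show ?thesis using step Gq_\<sigma>_\<sigma>[OF G1 v(1)] by simp
  next
    case (Some c)
    let ?u = "\<sigma>2 None (\<sigma>2 (Some c) (iso v))"
    let ?v = "\<sigma>1 None (\<sigma>1 (Some c) v)"
    have u: "?u \<in> {v\<in>V2. is_black \<sigma>2 r2 v}" using is_black_\<sigma>_\<sigma>[OF G2 iv(2)] is_black_in[OF G2] by blast
    have "\<phi>2 ?u = \<phi>1 ?v" using \<phi>1_succ \<phi>2_succ iv v by simp
    moreover have "?v \<in> V1" "is_black \<sigma>1 r1 ?v" using is_black_\<sigma>_\<sigma>[OF G1 v(2)] is_black_in[OF G1] by blast+
    ultimately have "iso ?v = ?u"
      using inv_into_f_f[OF bij_betw_imp_inj_on[OF \<phi>2_bij] u] unfolding iso_def by simp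
    then show ?thesis using step Some Gq_\<sigma>_\<sigma>[OF G2 Gq_\<sigma>_in[OF G2 iv(1)]] by simp
  qed
qed

lemma iso_\<sigma>: "v \<in> V1 \<Longrightarrow> iso (\<sigma>1 a v) = \<sigma>2 a (iso v)"
proof (cases "is_black \<sigma>1 r1 v")
  case False
  assume v: "v \<in> V1"
  have "\<sigma>1 a v \<in> V1" "is_black \<sigma>1 r1 (\<sigma>1 a v)" using v False is_black_\<sigma>[OF G1] Gq_\<sigma>_in[OF G1] by auto
  from iso_\<sigma>_black[OF this, of a] show ?thesis
    using Gq_\<sigma>_\<sigma>[OF G1 v] Gq_\<sigma>_\<sigma>[OF G2 iso_in[OF \<open>\<sigma>1 a v \<in> V1\<close>]] by metis
qed (use iso_\<sigma>_black in blast)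

end

lemma inverse_if_inverse_on_black:
  assumes G1: "Gq V1 \<sigma>1 r1"
    and f_in: "\<And>v. v \<in> V1 \<Longrightarrow> f v \<in> V2"
    and f_\<sigma>: "\<And>v a. v \<in> V1 \<Longrightarrow> f (\<sigma>1 a v) = \<sigma>2 a (f v)"
    and g_\<sigma>: "\<And>u a. u \<in> V2 \<Longrightarrow> g (\<sigma>2 a u) = \<sigma>1 a (g u)"
    and black: "\<And>v. v \<in> V1 \<Longrightarrow> is_black \<sigma>1 r1 v \<Longrightarrow> g (f v) = v"
    and v: "v \<in> V1"
  shows "g (f v) = v"
proof (cases "is_black \<sigma>1 r1 v")
  case False
  let ?v = "\<sigma>1 None v"
  have v': "?v \<in> V1" "is_black \<sigma>1 r1 ?v" using v False is_black_\<sigma>[OF G1] Gq_\<sigma>_in[OF G1] by auto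
  have "g (f (\<sigma>1 None ?v)) = \<sigma>1 None (g (f ?v))" using f_\<sigma>[OF v'(1)] g_\<sigma>[OF f_in[OF v'(1)]] by simp
  then show ?thesis using black[OF v'] Gq_\<sigma>_\<sigma>[OF G1 v] by simp
qed (use black v in blast)

lemma psi_rel_isomorphic:
  fixes \<sigma>1 :: "'c option \<Rightarrow> 'v \<Rightarrow> 'v" and \<sigma>2 :: "'c option \<Rightarrow> 'u \<Rightarrow> 'u"
  assumes G1: "Gq V1 \<sigma>1 r1" and G2: "Gq V2 \<sigma>2 r2"
    and "psi_rel V1 \<sigma>1 r1 W w0 nb succ" and "psi_rel V2 \<sigma>2 r2 W w0 nb succ"
  shows "\<exists>\<psi>. bij_betw \<psi> V1 V2 \<and> (\<forall>v\<in>V1. \<forall>a. \<psi> (\<sigma>1 a v) = \<sigma>2 a (\<psi> v))"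
proof -
  obtain \<phi>1 where \<phi>1: "bij_betw \<phi>1 {v\<in>V1. is_black \<sigma>1 r1 v} W"
    "\<forall>c. \<forall>v\<in>{v\<in>V1. is_black \<sigma>1 r1 v}. \<phi>1 (\<sigma>1 None (\<sigma>1 (Some c) v)) = succ c (\<phi>1 v)"
    using assms(3) unfolding psi_rel_def by blast
  obtain \<phi>2 where \<phi>2: "bij_betw \<phi>2 {v\<in>V2. is_black \<sigma>2 r2 v} W"
    "\<forall>c. \<forall>v\<in>{v\<in>V2. is_black \<sigma>2 r2 v}. \<phi>2 (\<sigma>2 None (\<sigma>2 (Some c) v)) = succ c (\<phi>2 v)"
    using assms(4) unfolding psi_rel_def by blast
  interpret A: same_constellation V1 \<sigma>1 r1 V2 \<sigma>2 r2 W succ \<phi>1 \<phi>2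
    using G1 G2 \<phi>1 \<phi>2 by unfold_locales auto
  interpret B: same_constellation V2 \<sigma>2 r2 V1 \<sigma>1 r1 W succ \<phi>2 \<phi>1
    using G1 G2 \<phi>1 \<phi>2 by unfold_locales auto
  have A_B_black: "A.iso (B.iso u) = u" if "u \<in> V2" "is_black \<sigma>2 r2 u" for u
    using A.iso_eq_if_\<phi>_eq B.iso_black[OF that] that by auto
  have B_A_black: "B.iso (A.iso v) = v" if "v \<in> V1" "is_black \<sigma>1 r1 v" for v
    using B.iso_eq_if_\<phi>_eq A.iso_black[OF that] that by auto
  have B_A: "B.iso (A.iso v) = v" if "v \<in> V1" for v
    using inverse_if_inverse_on_black[OF G1 A.iso_in A.iso_\<sigma> B.iso_\<sigma> B_A_black that] .
  have A_B: "A.iso (B.iso u) = u" if "u \<in> V2" for u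
    using inverse_if_inverse_on_black[OF G2 B.iso_in B.iso_\<sigma> A.iso_\<sigma> A_B_black that] .
  have "bij_betw A.iso V1 V2"
  proof (rule bij_betw_byWitness[where f'=B.iso])
    show "A.iso ` V1 \<subseteq> V2" "B.iso ` V2 \<subseteq> V1" using A.iso_in B.iso_in by auto
  qed (use B_A A_B in simp_all)
  then show ?thesis using A.iso_\<sigma> by blast
qed

section \<open>Removing a pending white vertex from a constellation\<close>

context
  fixes W :: "'w set" and w0 :: 'w and nb :: "'c \<Rightarrow> 'w \<Rightarrow> 'x" and succ :: "'c \<Rightarrow> 'w \<Rightarrow> 'w"
  assumes S: "constellation W w0 nb succ"
begin

lemma constellation_finite: "finite W"
  and constellation_root_in: "w0 \<in> W"
  and succ_permutes: "succ c permutes W"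
  and nb_succ: "u \<in> W \<Longrightarrow> nb c (succ c u) = nb c u"
  and succ_orbit: "u \<in> W \<Longrightarrow> u' \<in> W \<Longrightarrow> nb c u = nb c u' \<Longrightarrow> \<exists>n. (succ c ^^ n) u = u'"
  and constellation_connected:
    "u \<in> W \<Longrightarrow> u' \<in> W \<Longrightarrow> (\<lambda>p s. p \<in> W \<and> s \<in> W \<and> (\<exists>c. nb c p = nb c s))\<^sup>*\<^sup>* u u'"
  using S unfolding constellation_def by auto

lemma succ_in: "u \<in> W \<Longrightarrow> succ c u \<in> W"
  using permutes_in_image[OF succ_permutes] by simp

lemma succ_inj: "succ c u = succ c v \<Longrightarrow> u = v"
  by (rule injD[OF permutes_inj[OF succ_permutes]])

lemma succ_outside: "u \<notin> W \<Longrightarrow> succ c u = u"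
  by (rule permutes_not_in[OF succ_permutes])

context
  fixes w :: 'w
  assumes w_in: "w \<in> W"
begin

lemma remove_succ_in:
  assumes u: "u \<in> W - {w}"
  shows "remove_succ succ w c u \<in> W - {w}"
proof (cases "succ c u = w")
  case True
  have "succ c w \<noteq> w"
  proof
    assume "succ c w = w"
    then have "succ c u = succ c w" using True by simp
    then show False using succ_inj u by blast
  qed
  then show ?thesis using True u succ_in[OF w_in] unfolding remove_succ_def by auto
qed (use u succ_in in \<open>auto simp: remove_succ_def\<close>)

lemma remove_succ_inj: "inj_on (remove_succ succ w c) (W - {w})"
proof (rule inj_onI)
  fix u v assume u: "u \<in> W - {w}" and v: "v \<in> W - {w}"
    and e: "remove_succ succ w c u = remove_succ succ w c v"
  consider "succ c u = w" "succ c v = w" | "succ c u = w" "succ c v \<noteq> w"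
    | "succ c u \<noteq> w" "succ c v = w" | "succ c u \<noteq> w" "succ c v \<noteq> w" by blast
  then show "u = v"
  proof cases
    case 1 then show ?thesis using succ_inj by metis
  next
    case 2 then show ?thesis using e u v succ_inj[of c w v] unfolding remove_succ_def by auto
  next
    case 3 then show ?thesis using e u v succ_inj[of c u w] unfolding remove_succ_def by auto
  next
    case 4 then show ?thesis using e u v succ_inj[of c u v] unfolding remove_succ_def by auto
  qed
qed

lemma remove_succ_permutes: "remove_succ succ w c permutes (W - {w})"
proof (rule bij_imp_permutes)
  have "remove_succ succ w c ` (W - {w}) \<subseteq> W - {w}"
    using remove_succ_in by (rule image_subsetI)
  moreover have "finite (W - {w})" using constellation_finite by simp
  ultimately have "remove_succ succ w c ` (W - {w}) = W - {w}"
    using endo_inj_surj remove_succ_inj by blast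
  then show "bij_betw (remove_succ succ w c) (W - {w}) (W - {w})"
    using remove_succ_inj unfolding bij_betw_def by simp
  show "remove_succ succ w c u = u" if "u \<notin> W - {w}" for u
  proof (cases "u = w")
    case False
    then have "succ c u = u" using that succ_outside by simp
    then show ?thesis using False unfolding remove_succ_def by simp
  qed (simp add: remove_succ_def)
qed

lemma nb_remove_succ:
  assumes u: "u \<in> W - {w}"
  shows "nb c (remove_succ succ w c u) = nb c u"
proof (cases "succ c u = w")
  case True
  then have "nb c (succ c w) = nb c u" using nb_succ[OF w_in] nb_succ[of u c] u by simp
  then show ?thesis using True u unfolding remove_succ_def by simp
qed (use nb_succ u in \<open>simp add: remove_succ_def\<close>)

lemma remove_succ_orbit_funpow:
  "u \<in> W - {w} \<Longrightarrow> (succ c ^^ n) u \<in> W - {w} \<Longrightarrow> \<exists>m. (remove_succ succ w c ^^ m) u = (succ c ^^ n) u"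
proof (induction n arbitrary: u rule: less_induct)
  case (less n)
  show ?case
  proof (cases n)
    case 0 then show ?thesis by (intro exI[of _ 0]) simp
  next
    case (Suc k)
    have n_k: "(succ c ^^ n) u = (succ c ^^ k) (succ c u)"
      using Suc by (simp del: funpow.simps add: funpow_Suc_right)
    show ?thesis
    proof (cases "succ c u = w")
      case False
      have su: "succ c u \<in> W - {w}" using False succ_in less.prems(1) by auto
      obtain m where "(remove_succ succ w c ^^ m) (succ c u) = (succ c ^^ k) (succ c u)"
        using less.IH[of k "succ c u"] Suc su less.prems(2) n_k by auto
      moreover have "remove_succ succ w c u = succ c u"
        using False less.prems(1) unfolding remove_succ_def by auto
      ultimately have "(remove_succ succ w c ^^ Suc m) u = (succ c ^^ n) u"
        using n_k by (simp del: funpow.simps add: funpow_Suc_right)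
      then show ?thesis by blast
    next
      case True
      have fix_w: "(succ c ^^ j) w = w" if "succ c w = w" for j
        using that by (induction j) auto
      obtain j where j: "k = Suc j"
        using n_k True less.prems(2) by (cases k) auto
      have n_j: "(succ c ^^ n) u = (succ c ^^ j) (succ c w)"
        using n_k True j by (simp del: funpow.simps add: funpow_Suc_right)
      then have sw: "succ c w \<in> W - {w}"
        using fix_w less.prems(2) succ_in[OF w_in] by (cases "succ c w = w") auto
      obtain m where "(remove_succ succ w c ^^ m) (succ c w) = (succ c ^^ j) (succ c w)"
        using less.IH[of j "succ c w"] Suc j sw less.prems(2) n_j by auto
      moreover have "remove_succ succ w c u = succ c w"
        using True less.prems(1) unfolding remove_succ_def by auto
      ultimately have "(remove_succ succ w c ^^ Suc m) u = (succ c ^^ n) u"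
        using n_j by (simp del: funpow.simps add: funpow_Suc_right)
      then show ?thesis by blast
    qed
  qed
qed

lemma remove_succ_orbit:
  assumes "u \<in> W - {w}" "u' \<in> W - {w}" "nb c u = nb c u'"
  shows "\<exists>m. (remove_succ succ w c ^^ m) u = u'"
  using succ_orbit[of u u' c] remove_succ_orbit_funpow[OF assms(1)] assms by auto

end

end

locale pending_white_vertex =
  fixes W :: "'w set" and w0 :: 'w and nb :: "'c::finite \<Rightarrow> 'w \<Rightarrow> 'x"
    and succ :: "'c \<Rightarrow> 'w \<Rightarrow> 'w" and w :: 'w and i :: 'c
  assumes S: "constellation W w0 nb succ"
    and w_in: "w \<in> W" and w_ne_root: "w \<noteq> w0"
    and leaves: "\<forall>c. c \<noteq> i \<longrightarrow> nbdeg W nb c w = 1"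
    and deg_i: "nbdeg W nb i w \<ge> 2"
begin

lemma leaf_unique:
  assumes "c \<noteq> i" "s \<in> W" "nb c s = nb c w"
  shows "s = w"
proof -
  have "card {w'\<in>W. nb c w' = nb c w} = 1" using leaves assms(1) unfolding nbdeg_def by simp
  then obtain z where z: "{w'\<in>W. nb c w' = nb c w} = {z}" by (rule card_1_singletonE)
  have "w \<in> {z}" "s \<in> {z}" using z w_in assms by blast+
  then show ?thesis by simp
qed

lemma succ_other_w: "c \<noteq> i \<Longrightarrow> succ c w = w"
  using leaf_unique[of c "succ c w"] succ_in[OF S w_in] nb_succ[OF S w_in] by simp

lemma succ_i_w_neq: "succ i w \<noteq> w"
proof
  assume f: "succ i w = w"
  have it: "(succ i ^^ n) w = w" for n by (induction n) (simp_all add: f)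
  have "{w'\<in>W. nb i w' = nb i w} \<subseteq> {w}"
  proof
    fix s assume "s \<in> {w'\<in>W. nb i w' = nb i w}"
    then obtain n where "(succ i ^^ n) w = s" using succ_orbit[OF S w_in, of s i] by auto
    then show "s \<in> {w}" using it by simp
  qed
  then have "card {w'\<in>W. nb i w' = nb i w} \<le> 1" using card_mono[of "{w}"] by fastforce
  then show False using deg_i unfolding nbdeg_def by simp
qed

abbreviation linked_in_reduced :: "'w \<Rightarrow> 'w \<Rightarrow> bool" where
  "linked_in_reduced \<equiv> \<lambda>p s. p \<in> W - {w} \<and> s \<in> W - {w} \<and> (\<exists>c. nb c p = nb c s)"

text \<open>Paths through \<open>w\<close> are rerouted through \<open>succ i w\<close>, its only neighbour in \<open>W - {w}\<close>.\<close>

definition reroute :: "'w \<Rightarrow> 'w" where "reroute p = (if p = w then succ i w else p)"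

lemma reroute_step:
  assumes "p \<in> W" "s \<in> W" "nb c p = nb c s"
  shows "linked_in_reduced\<^sup>*\<^sup>* (reroute p) (reroute s)"
proof -
  have z: "succ i w \<in> W - {w}" "nb i (succ i w) = nb i w"
    using succ_i_w_neq succ_in[OF S w_in] nb_succ[OF S w_in] by auto
  show ?thesis
  proof (cases "p = w \<and> s = w")
    case False
    have "linked_in_reduced (reroute p) (reroute s)"
    proof (cases "p = w \<or> s = w")
      case True
      have "c = i"
      proof (rule ccontr)
        assume "c \<noteq> i"
        then have "p = w" "s = w" using True leaf_unique assms by metis+
        then show False using False by simp
      qed
      then show ?thesis using z assms False unfolding reroute_def by (auto intro!: exI[of _ i])
    qed (use assms in \<open>auto simp: reroute_def\<close>)
    then show ?thesis by (rule r_into_rtranclp)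
  qed simp
qed

lemma reduced_connected:
  assumes u: "u \<in> W - {w}" and v: "v \<in> W - {w}"
  shows "linked_in_reduced\<^sup>*\<^sup>* u v"
proof -
  have "(\<lambda>p s. p \<in> W \<and> s \<in> W \<and> (\<exists>c. nb c p = nb c s))\<^sup>*\<^sup>* u v"
    using constellation_connected[OF S] u v by blast
  then have "linked_in_reduced\<^sup>*\<^sup>* (reroute u) (reroute v)"
  proof (induction rule: rtranclp_induct)
    case (step y' z)
    then show ?case using reroute_step by (blast intro: rtranclp_trans)
  qed simp
  then show ?thesis using u v unfolding reroute_def by auto
qed

theorem constellation_remove_pending: "constellation (W - {w}) w0 nb (remove_succ succ w)"
  unfolding constellation_def
proof (intro conjI allI ballI impI)
  show "finite (W - {w})" using constellation_finite[OF S] by simp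
  show "w0 \<in> W - {w}" using constellation_root_in[OF S] w_ne_root by simp
  fix c
  show "remove_succ succ w c permutes (W - {w})" using remove_succ_permutes[OF S w_in] .
  show "nb c (remove_succ succ w c u) = nb c u" if "u \<in> W - {w}" for u
    using nb_remove_succ[OF S w_in that] .
  show "\<exists>n. (remove_succ succ w c ^^ n) u = u'" if "u \<in> W - {w}" "u' \<in> W - {w}" "nb c u = nb c u'" for u u'
    using remove_succ_orbit[OF S w_in that] .
next
  fix u v assume "u \<in> W - {w}" "v \<in> W - {w}"
  then show "linked_in_reduced\<^sup>*\<^sup>* u v" using reduced_connected by blast
qed

end

section \<open>The graph of a constellation with a pending white vertex\<close>

locale pending_white_vertex_graph = pending_white_vertex W w0 nb succ w i
  for W :: "'w set" and w0 :: 'w and nb :: "'c::finite \<Rightarrow> 'w \<Rightarrow> 'x"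
    and succ :: "'c \<Rightarrow> 'w \<Rightarrow> 'w" and w :: 'w and i :: 'c +
  fixes V :: "'v set" and \<sigma> :: "'c option \<Rightarrow> 'v \<Rightarrow> 'v" and r :: 'v
  assumes two_colours: "CARD('c) \<ge> 2"
    and G: "Gq V \<sigma> r" and R: "psi_rel V \<sigma> r W w0 nb succ"
begin

lemmas \<sigma>_in = Gq_\<sigma>_in[OF G] and \<sigma>_neq = Gq_\<sigma>_neq[OF G] and \<sigma>_\<sigma> = Gq_\<sigma>_\<sigma>[OF G]
  and is_black_\<sigma> = is_black_\<sigma>[OF G]

definition B :: "'v set" where "B = {v\<in>V. is_black \<sigma> r v}"

definition \<phi> :: "'v \<Rightarrow> 'w" where
  "\<phi> = (SOME \<phi>. bij_betw \<phi> B W \<and> \<phi> r = w0 \<and>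
      (\<forall>c. \<forall>v\<in>B. \<phi> (\<sigma> None (\<sigma> (Some c) v)) = succ c (\<phi> v)))"

lemma \<phi>_bij: "bij_betw \<phi> B W" and \<phi>_root: "\<phi> r = w0"
  and \<phi>_step: "v \<in> B \<Longrightarrow> \<phi> (\<sigma> None (\<sigma> (Some c) v)) = succ c (\<phi> v)"
proof -
  have "\<exists>\<phi>. bij_betw \<phi> B W \<and> \<phi> r = w0 \<and> (\<forall>c. \<forall>v\<in>B. \<phi> (\<sigma> None (\<sigma> (Some c) v)) = succ c (\<phi> v))"
    using R unfolding psi_rel_def B_def .
  then have "bij_betw \<phi> B W \<and> \<phi> r = w0 \<and> (\<forall>c. \<forall>v\<in>B. \<phi> (\<sigma> None (\<sigma> (Some c) v)) = succ c (\<phi> v))"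
    unfolding \<phi>_def by (rule someI_ex)
  then show "bij_betw \<phi> B W" "\<phi> r = w0" "v \<in> B \<Longrightarrow> \<phi> (\<sigma> None (\<sigma> (Some c) v)) = succ c (\<phi> v)"
    by auto
qed

lemma \<phi>_inj: "inj_on \<phi> B"
  using \<phi>_bij by (simp add: bij_betw_def)

lemma B_\<sigma>_\<sigma>: "v \<in> B \<Longrightarrow> \<sigma> c (\<sigma> a v) \<in> B"
  unfolding B_def using is_black_\<sigma>_\<sigma>[OF G] is_black_in[OF G] by blast

definition b :: 'v where "b = inv_into B \<phi> w"
definition b' :: 'v where "b' = \<sigma> None b"
definition x :: 'v where "x = \<sigma> (Some i) b"
definition y :: 'v where "y = \<sigma> (Some i) b'"

lemma b_in_B: "b \<in> B" and \<phi>_b: "\<phi> b = w"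
  using w_in \<phi>_bij unfolding b_def bij_betw_def by (auto intro: inv_into_into f_inv_into_f)

lemma b_in: "b \<in> V" and b_black: "is_black \<sigma> r b"
  using b_in_B unfolding B_def by auto

lemma b'_in: "b' \<in> V" and x_in: "x \<in> V" and y_in: "y \<in> V"
  unfolding b'_def x_def y_def using \<sigma>_in b_in by auto

lemma b'_white: "\<not> is_black \<sigma> r b'" and x_white: "\<not> is_black \<sigma> r x" and y_black: "is_black \<sigma> r y"
  unfolding b'_def x_def y_def using is_black_\<sigma> b_in b_black \<sigma>_in by auto

text \<open>The colour-\<open>c\<close> cycles through \<open>w\<close> are loops for \<open>c \<noteq> i\<close>, so \<open>b\<close> and \<open>b'\<close> are joined
  by every colour except \<open>i\<close>.\<close>

lemma \<sigma>_other_b: assumes "c \<noteq> i" shows "\<sigma> (Some c) b = b'"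
proof -
  have "\<phi> (\<sigma> None (\<sigma> (Some c) b)) = \<phi> b" using \<phi>_step[OF b_in_B] \<phi>_b succ_other_w[OF assms] by simp
  then have "\<sigma> None (\<sigma> (Some c) b) = b" using inj_onD[OF \<phi>_inj] B_\<sigma>_\<sigma>[OF b_in_B] b_in_B by blast
  then show ?thesis using \<sigma>_\<sigma>[OF \<sigma>_in[OF b_in]] unfolding b'_def by metis
qed

lemma \<sigma>_other_b': "c \<noteq> i \<Longrightarrow> \<sigma> (Some c) b' = b"
  using \<sigma>_other_b \<sigma>_\<sigma>[OF b_in] by metis

lemma \<sigma>_b'_0: "\<sigma> None b' = b" and \<sigma>_x_i: "\<sigma> (Some i) x = b" and \<sigma>_y_i: "\<sigma> (Some i) y = b'"
  unfolding b'_def x_def y_def using \<sigma>_\<sigma>[OF b_in] \<sigma>_\<sigma>[OF b'_in[unfolded b'_def]] by auto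

lemma distinct: "b \<noteq> b'" "x \<noteq> b" "x \<noteq> b'" "y \<noteq> b" "y \<noteq> b'" "x \<noteq> y"
proof -
  show bb': "b \<noteq> b'" using \<sigma>_neq[OF b_in] unfolding b'_def by metis
  show "x \<noteq> b" using \<sigma>_neq[OF b_in] unfolding x_def by metis
  show xb': "x \<noteq> b'"
  proof
    assume "x = b'"
    then have "\<phi> (\<sigma> None (\<sigma> (Some i) b)) = \<phi> b" unfolding x_def b'_def using \<sigma>_\<sigma>[OF b_in] by simp
    then show False using \<phi>_step[OF b_in_B] \<phi>_b succ_i_w_neq by simp
  qed
  show "y \<noteq> b'" using \<sigma>_neq[OF b'_in] unfolding y_def by metis
  show "y \<noteq> b" using xb' \<sigma>_\<sigma>[OF b'_in] unfolding y_def x_def by metis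
  show "x \<noteq> y" using bb' \<sigma>_\<sigma>[OF b_in] \<sigma>_\<sigma>[OF b'_in] unfolding y_def x_def by metis
qed

lemma b_ne_root: "b \<noteq> r" and b'_ne_root: "b' \<noteq> r"
  using \<phi>_b \<phi>_root w_ne_root b'_white is_black_root[OF G] by auto

lemma succ_eq_w:
  assumes u: "u \<in> B" "u \<noteq> b" and e: "succ c (\<phi> u) = w"
  shows "c = i \<and> u = y"
proof -
  have c: "c = i"
  proof (rule ccontr)
    assume "c \<noteq> i"
    then have "\<phi> u = \<phi> b" using e succ_other_w succ_inj[OF S] \<phi>_b by metis
    then show False using inj_onD[OF \<phi>_inj] u b_in_B by blast
  qed
  have "\<phi> (\<sigma> None (\<sigma> (Some i) u)) = \<phi> b" using \<phi>_step[OF u(1)] e c \<phi>_b by simp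
  then have "\<sigma> None (\<sigma> (Some i) u) = b" using inj_onD[OF \<phi>_inj] B_\<sigma>_\<sigma>[OF u(1)] b_in_B by blast
  moreover have uV: "u \<in> V" using u(1) unfolding B_def by simp
  ultimately have "\<sigma> (Some i) u = b'" using \<sigma>_\<sigma>[OF \<sigma>_in[OF uV]] unfolding b'_def by metis
  then have "u = y" unfolding y_def using \<sigma>_\<sigma>[OF uV] by metis
  then show ?thesis using c by simp
qed

definition V_red :: "'v set" where "V_red = V - {b, b'}"

definition \<sigma>_red :: "'c option \<Rightarrow> 'v \<Rightarrow> 'v" where
  "\<sigma>_red a v = (if a = Some i \<and> v = x then y else if a = Some i \<and> v = y then x else \<sigma> a v)"

lemma x_in_red: "x \<in> V_red" and y_in_red: "y \<in> V_red" and root_in_red: "r \<in> V_red"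
  unfolding V_red_def using x_in y_in Gq_root_in[OF G] distinct b_ne_root b'_ne_root by auto

lemma \<sigma>_b: "\<sigma> a b = (if a = Some i then x else b')"
  using \<sigma>_other_b unfolding x_def b'_def by (cases a) auto

lemma \<sigma>_b': "\<sigma> a b' = (if a = Some i then y else b)"
  using \<sigma>_other_b' \<sigma>_b'_0 unfolding y_def by (cases a) auto

lemma \<sigma>_eq_b: "v \<in> V \<Longrightarrow> \<sigma> a v = b \<Longrightarrow> v = (if a = Some i then x else b')"
  using \<sigma>_\<sigma>[of v a] \<sigma>_b[of a] by metis

lemma \<sigma>_eq_b': "v \<in> V \<Longrightarrow> \<sigma> a v = b' \<Longrightarrow> v = (if a = Some i then y else b)"
  using \<sigma>_\<sigma>[of v a] \<sigma>_b'[of a] by metis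

lemma \<sigma>_red_eq_\<sigma>:
  assumes v: "v \<in> V_red" and n: "\<not> (a = Some i \<and> (v = x \<or> v = y))"
  shows "\<sigma>_red a v = \<sigma> a v \<and> \<sigma> a v \<in> V_red"
proof -
  have vV: "v \<in> V" "v \<noteq> b" "v \<noteq> b'" using v unfolding V_red_def by auto
  have "\<sigma> a v \<noteq> b" using \<sigma>_eq_b[OF vV(1), of a] vV n by (auto split: if_splits)
  moreover have "\<sigma> a v \<noteq> b'" using \<sigma>_eq_b'[OF vV(1), of a] vV n by (auto split: if_splits)
  ultimately show ?thesis using n \<sigma>_in[OF vV(1)] unfolding \<sigma>_red_def V_red_def by auto
qed

lemma \<sigma>_red_in: "v \<in> V_red \<Longrightarrow> \<sigma>_red a v \<in> V_red"
  using \<sigma>_red_eq_\<sigma>[of v a] x_in_red y_in_red unfolding \<sigma>_red_def by auto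

lemma \<sigma>_red_neq: "v \<in> V_red \<Longrightarrow> \<sigma>_red a v \<noteq> v"
  using \<sigma>_red_eq_\<sigma>[of v a] distinct \<sigma>_neq[of v a] unfolding \<sigma>_red_def V_red_def by auto

lemma \<sigma>_red_\<sigma>_red: "v \<in> V_red \<Longrightarrow> \<sigma>_red a (\<sigma>_red a v) = v"
proof (cases "a = Some i \<and> (v = x \<or> v = y)")
  case False
  assume v: "v \<in> V_red"
  have e: "\<sigma>_red a v = \<sigma> a v" "\<sigma> a v \<in> V_red" using \<sigma>_red_eq_\<sigma>[OF v False] by auto
  have "\<not> (a = Some i \<and> (\<sigma> a v = x \<or> \<sigma> a v = y))"
  proof
    assume h: "a = Some i \<and> (\<sigma> a v = x \<or> \<sigma> a v = y)"
    then have "v = \<sigma> a x \<or> v = \<sigma> a y" using \<sigma>_\<sigma> v unfolding V_red_def by (metis DiffD1)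
    then show False using h \<sigma>_x_i \<sigma>_y_i v unfolding V_red_def by auto
  qed
  then have "\<sigma>_red a (\<sigma> a v) = \<sigma> a (\<sigma> a v)" using \<sigma>_red_eq_\<sigma>[OF e(2)] by auto
  then show ?thesis using e \<sigma>_\<sigma> v unfolding V_red_def by auto
qed (use distinct in \<open>auto simp: \<sigma>_red_def\<close>)

lemma is_black_\<sigma>_red: "v \<in> V_red \<Longrightarrow> is_black \<sigma> r (\<sigma>_red a v) \<longleftrightarrow> \<not> is_black \<sigma> r v"
proof (cases "a = Some i \<and> (v = x \<or> v = y)")
  case False
  assume "v \<in> V_red"
  then show ?thesis using \<sigma>_red_eq_\<sigma>[OF _ False] is_black_\<sigma> unfolding V_red_def by auto
qed (use x_white y_black distinct in \<open>auto simp: \<sigma>_red_def\<close>)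

text \<open>Every vertex of \<open>G\<close> is reached from \<open>r\<close> in the reduced graph once \<open>b\<close> and \<open>b'\<close> are
  replaced by \<open>x\<close> and \<open>y\<close>, which are adjacent there.\<close>

definition avoid_dipole :: "'v \<Rightarrow> 'v" where
  "avoid_dipole v = (if v = b then x else if v = b' then y else v)"

abbreviation step_red :: "'v \<Rightarrow> 'v \<Rightarrow> bool" where "step_red \<equiv> \<lambda>p s. \<exists>a. s = \<sigma>_red a p"

lemma step_red_x_y: "u \<in> {x, y} \<Longrightarrow> v \<in> {x, y} \<Longrightarrow> step_red\<^sup>*\<^sup>* u v"
proof -
  assume u: "u \<in> {x, y}" and v: "v \<in> {x, y}"
  have "step_red x y" unfolding \<sigma>_red_def by (intro exI[of _ "Some i"]) simp
  moreover have "step_red y x" using distinct unfolding \<sigma>_red_def by (intro exI[of _ "Some i"]) simp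
  ultimately show ?thesis using u v by auto
qed

lemma avoid_dipole_step:
  assumes z: "z \<in> V"
  shows "step_red\<^sup>*\<^sup>* (avoid_dipole z) (avoid_dipole (\<sigma> a z))"
proof (cases "z \<in> {b, b'} \<or> \<sigma> a z \<in> {b, b'}")
  case True
  have "avoid_dipole z \<in> {x, y} \<and> avoid_dipole (\<sigma> a z) \<in> {x, y}"
  proof -
    consider "z = b" | "z = b'" | "\<sigma> a z = b" | "\<sigma> a z = b'" using True by blast
    then show ?thesis
    proof cases
      case 1 then show ?thesis using \<sigma>_b[of a] distinct unfolding avoid_dipole_def by auto
    next
      case 2 then show ?thesis using \<sigma>_b'[of a] distinct unfolding avoid_dipole_def by auto
    next
      case 3 then show ?thesis using \<sigma>_eq_b[OF z 3] distinct unfolding avoid_dipole_def by auto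
    next
      case 4 then show ?thesis using \<sigma>_eq_b'[OF z 4] distinct unfolding avoid_dipole_def by auto
    qed
  qed
  then show ?thesis using step_red_x_y by blast
next
  case False
  then have zV: "z \<in> V_red" using z unfolding V_red_def by auto
  have "\<not> (a = Some i \<and> (z = x \<or> z = y))" using False \<sigma>_x_i \<sigma>_y_i by auto
  then have "\<sigma>_red a z = \<sigma> a z" using \<sigma>_red_eq_\<sigma>[OF zV] by simp
  then have "step_red z (\<sigma> a z)" by metis
  then show ?thesis using False unfolding avoid_dipole_def by auto
qed

lemma step_red_from_root: "v \<in> V_red \<Longrightarrow> step_red\<^sup>*\<^sup>* r v"
proof -
  assume v: "v \<in> V_red"
  have "z \<in> V \<and> step_red\<^sup>*\<^sup>* r (avoid_dipole z)" if "(\<lambda>p s. \<exists>a. s = \<sigma> a p)\<^sup>*\<^sup>* r z" for z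
    using that
  proof (induction rule: rtranclp_induct)
    case base then show ?case using Gq_root_in[OF G] b_ne_root b'_ne_root unfolding avoid_dipole_def by auto
  next
    case (step y' z)
    then obtain a where z: "z = \<sigma> a y'" by blast
    have "step_red\<^sup>*\<^sup>* (avoid_dipole y') (avoid_dipole z)" using avoid_dipole_step[of y' a] step.IH z by simp
    then show ?case using step.IH z \<sigma>_in by (meson rtranclp_trans)
  qed
  moreover have "(\<lambda>p s. \<exists>a. s = \<sigma> a p)\<^sup>*\<^sup>* r v"
    using Gq_connected[OF G Gq_root_in[OF G]] v unfolding V_red_def by simp
  ultimately have "step_red\<^sup>*\<^sup>* r (avoid_dipole v)" by blast
  moreover have "avoid_dipole v = v" using v unfolding avoid_dipole_def V_red_def by auto
  ultimately show ?thesis by simp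
qed

lemma step_red_sym:
  assumes p: "p \<in> V_red" and st: "step_red\<^sup>*\<^sup>* p s"
  shows "s \<in> V_red \<and> step_red\<^sup>*\<^sup>* s p"
  using st
proof (induction rule: rtranclp_induct)
  case (step y' z)
  then obtain a where z: "z = \<sigma>_red a y'" by blast
  have "y' = \<sigma>_red a z" using \<sigma>_red_\<sigma>_red step.IH z by simp
  then have "step_red\<^sup>*\<^sup>* z p" using step.IH by (blast intro: converse_rtranclp_into_rtranclp)
  then show ?case using \<sigma>_red_in step.IH z by simp
qed (use p in simp)

theorem Gq_reduced: "Gq V_red \<sigma>_red r"
  unfolding Gq_def colored_graph_def
proof (intro conjI ballI allI)
  show "finite V_red" using Gq_finite[OF G] unfolding V_red_def by simp
  show "V_red \<noteq> {}" "r \<in> V_red" using root_in_red by blast+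
  fix a v assume v: "v \<in> V_red"
  show "\<sigma>_red a v \<in> V_red" "\<sigma>_red a v \<noteq> v" "\<sigma>_red a (\<sigma>_red a v) = v"
    using \<sigma>_red_in[OF v] \<sigma>_red_neq[OF v] \<sigma>_red_\<sigma>_red[OF v] by auto
next
  fix u v assume u: "u \<in> V_red" and v: "v \<in> V_red"
  have "step_red\<^sup>*\<^sup>* u r" using step_red_sym[OF root_in_red step_red_from_root[OF u]] by blast
  then show "step_red\<^sup>*\<^sup>* u v" using step_red_from_root[OF v] by (meson rtranclp_trans)
next
  show "\<exists>black. black r \<and> (\<forall>a. \<forall>v\<in>V_red. black (\<sigma>_red a v) = (\<not> black v))"
    using is_black_\<sigma>_red is_black_root[OF G] by blast
qed

lemma is_black_reduced: "is_black \<sigma>_red r v \<longleftrightarrow> v \<in> V_red \<and> is_black \<sigma> r v"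
proof -
  have col: "\<forall>a. \<forall>v\<in>V_red. is_black \<sigma> r (\<sigma>_red a v) \<longleftrightarrow> \<not> is_black \<sigma> r v"
    using is_black_\<sigma>_red by blast
  show ?thesis
    using is_black_iff_colouring[OF Gq_reduced is_black_root[OF G] col] is_black_in[OF Gq_reduced] by blast
qed

theorem psi_rel_reduced: "psi_rel V_red \<sigma>_red r (W - {w}) w0 nb (remove_succ succ w)"
proof -
  have B_red: "{v\<in>V_red. is_black \<sigma>_red r v} = B - {b}"
    using is_black_reduced b'_white unfolding V_red_def B_def by auto
  have "bij_betw \<phi> (B - {b}) (W - {w})"
    using bij_betw_DiffI[OF \<phi>_bij, of "{b}" "{w}"] b_in_B \<phi>_b w_in by simp
  moreover have "\<phi> (\<sigma>_red None (\<sigma>_red (Some c) u)) = remove_succ succ w c (\<phi> u)" if u: "u \<in> B - {b}" for c u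
  proof -
    have uB: "u \<in> B" "u \<noteq> b" using u by auto
    have ux: "u \<noteq> x" using uB x_white unfolding B_def by auto
    have \<phi>u: "\<phi> u \<noteq> w" using inj_onD[OF \<phi>_inj, of u b] uB b_in_B \<phi>_b by auto
    have \<sigma>_red_0: "\<sigma>_red None v = \<sigma> None v" for v unfolding \<sigma>_red_def by simp
    show ?thesis
    proof (cases "c = i \<and> u = y")
      case True
      have "succ c (\<phi> u) = w" using True \<phi>_step[OF uB(1), of i] \<sigma>_y_i \<sigma>_b'_0 \<phi>_b by simp
      then have "remove_succ succ w c (\<phi> u) = succ i w" using \<phi>u True unfolding remove_succ_def by simp
      also have "\<dots> = \<phi> (\<sigma> None x)" using \<phi>_step[OF b_in_B, of i] \<phi>_b unfolding x_def by simp
      finally show ?thesis using True \<sigma>_red_0 distinct unfolding \<sigma>_red_def by simp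
    next
      case False
      have "succ c (\<phi> u) \<noteq> w" using succ_eq_w[OF uB] False by blast
      moreover have "\<sigma>_red (Some c) u = \<sigma> (Some c) u" using False ux unfolding \<sigma>_red_def by auto
      ultimately show ?thesis using \<phi>u \<phi>_step[OF uB(1)] \<sigma>_red_0 unfolding remove_succ_def by simp
    qed
  qed
  ultimately show ?thesis unfolding psi_rel_def B_red using \<phi>_root by blast
qed

theorem PL_homeomorphic_reduced:
  fixes V' :: "'u set" and \<sigma>' :: "'c option \<Rightarrow> 'u \<Rightarrow> 'u"
  assumes G': "Gq V' \<sigma>' r'" and R': "psi_rel V' \<sigma>' r' (W - {w}) w0 nb (remove_succ succ w)"
  shows "PL_homeomorphic V (hat0 \<sigma>) V' (hat0 \<sigma>')"
proof -
  obtain \<psi> where bij: "bij_betw \<psi> V_red V'" and hom: "\<forall>v\<in>V_red. \<forall>a. \<psi> (\<sigma>_red a v) = \<sigma>' a (\<psi> v)"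
    using psi_rel_isomorphic[OF Gq_reduced G' psi_rel_reduced R'] by blast
  have hom_red: "hat0 \<sigma>' c (\<psi> v) = \<psi> (\<sigma>_red (Some c) v)" if "v \<in> V_red" for c v
    using hom that unfolding hat0_def by simp
  interpret dipole_removal V "hat0 \<sigma>" V' "hat0 \<sigma>'" \<psi> i b b' x y
  proof
    show "involutive_on V (hat0 \<sigma>)" "involutive_on V' (hat0 \<sigma>')"
      unfolding involutive_on_def hat0_def using \<sigma>_in \<sigma>_\<sigma> Gq_\<sigma>_in[OF G'] Gq_\<sigma>_\<sigma>[OF G'] by simp_all
    show "hat0 \<sigma> c b = b'" if "c \<noteq> i" for c unfolding hat0_def using \<sigma>_other_b[OF that] .
    show "hat0 \<sigma> i b = x" "hat0 \<sigma> i b' = y" unfolding hat0_def x_def y_def by simp_all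
    show "bij_betw \<psi> (V - {b, b'}) V'" using bij unfolding V_red_def .
    show "hat0 \<sigma>' c (\<psi> u) = \<psi> (hat0 \<sigma> c u)" if "u \<in> V - {b, b'}" "c = i \<Longrightarrow> u \<noteq> x \<and> u \<noteq> y" for u c
      using hom_red[of u c] that unfolding V_red_def \<sigma>_red_def hat0_def by auto
    show "hat0 \<sigma>' i (\<psi> x) = \<psi> y" "hat0 \<sigma>' i (\<psi> y) = \<psi> x"
      using hom_red[OF x_in_red, of i] hom_red[OF y_in_red, of i] distinct unfolding \<sigma>_red_def by auto
  qed (use two_colours b_in b'_in distinct in auto)
  show ?thesis by (rule PL_homeomorphic_dipole_removal)
qed

end

theorem mainTheorem17:
  fixes V :: "'v set" and \<sigma> :: "'c::finite option \<Rightarrow> 'v \<Rightarrow> 'v" and r :: 'v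
    and W :: "'w set" and w0 :: 'w and nb :: "'c \<Rightarrow> 'w \<Rightarrow> 'x"
    and succ :: "'c \<Rightarrow> 'w \<Rightarrow> 'w" and w :: 'w and i :: 'c
  assumes "CARD('c) \<ge> 3"
    and "Gq V \<sigma> r"
    and "constellation W w0 nb succ"
    and "psi_rel V \<sigma> r W w0 nb succ"
    and "w \<in> W" and "w \<noteq> w0"
    and "\<forall>c. c \<noteq> i \<longrightarrow> nbdeg W nb c w = 1"
    and "nbdeg W nb i w \<ge> 2"
  shows "constellation (W - {w}) w0 nb (remove_succ succ w) \<and>
         (\<exists>(V' :: 'v set) (\<sigma>' :: 'c option \<Rightarrow> 'v \<Rightarrow> 'v) r'. Gq V' \<sigma>' r' \<and> psi_rel V' \<sigma>' r' (W - {w}) w0 nb (remove_succ succ w)) \<and>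
         (\<forall>(V' :: 'v set) (\<sigma>' :: 'c option \<Rightarrow> 'v \<Rightarrow> 'v) r'.
            Gq V' \<sigma>' r' \<and> psi_rel V' \<sigma>' r' (W - {w}) w0 nb (remove_succ succ w) \<longrightarrow>
            PL_homeomorphic V (hat0 \<sigma>) V' (hat0 \<sigma>'))"
proof -
  interpret pending_white_vertex_graph W w0 nb succ w i V \<sigma> r
    using assms by unfold_locales auto
  show ?thesis
  proof (intro conjI allI impI)
    show "constellation (W - {w}) w0 nb (remove_succ succ w)" by (rule constellation_remove_pending)
    show "\<exists>(V' :: 'v set) (\<sigma>' :: 'c option \<Rightarrow> 'v \<Rightarrow> 'v) r'.
        Gq V' \<sigma>' r' \<and> psi_rel V' \<sigma>' r' (W - {w}) w0 nb (remove_succ succ w)"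
      using Gq_reduced psi_rel_reduced by blast
    fix V' :: "'v set" and \<sigma>' :: "'c option \<Rightarrow> 'v \<Rightarrow> 'v" and r'
    assume "Gq V' \<sigma>' r' \<and> psi_rel V' \<sigma>' r' (W - {w}) w0 nb (remove_succ succ w)"
    then show "PL_homeomorphic V (hat0 \<sigma>) V' (hat0 \<sigma>')"
      using PL_homeomorphic_reduced[of V' \<sigma>' r'] by blast
  qed
qed

end
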